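(* Let $(q_n),(r_n)$ be complex sequences vanishing faster than any negative power of $|n|$ as $n\to\pm\infty$, with $1-q_nr_n\ne0$ and $1+q_nr_{n+1}\neq0$ for all $n\in\mathbb Z$. Let $T$ and $\bar T$ be the transmission coefficients (with their meromorphic extensions to $|z|<1$ and $|z|>1$, respectively) of the system $$\begin{bmatrix}\alpha_n\\ \beta_n\end{bmatrix}=\begin{bmatrix} z & (z-z^{-1})q_n\\ z\,r_n & z^{-1}+(z-z^{-1})q_nr_n\end{bmatrix}\begin{bmatrix}\alpha_{n+1}\\ \beta_{n+1}\end{bmatrix}.$$ Then $$T=\frac1{D_\infty}\big[1-z^2S_\infty+O(z^4)\big],\quad z\to0,\qquad \bar T=\frac1{E_\infty}\Big[1-\frac1{z^2}Q_\infty+O(z^{-4})\Big],\quad z\to\infty,$$ where $D_\infty=\prod_{j\in\mathbb Z}(1-q_jr_j)$, $E_\infty=\prod_{j\in\mathbb Z}(1+q_jr_{j+1})$, $$S_\infty=\sum_{k=-\infty}^{\infty}\frac{r_k(q_k-q_{k+1}-q_kq_{k+1}r_{k+1})}{(1-q_kr_k)(1-q_{k+1}r_{k+1})},\qquad Q_\infty=\sum_{k=-\infty}^{\infty}\frac{r_{k+2}(q_k-q_{k+1}-q_kq_{k+1}r_{k+1})}{(1+q_kr_{k+1})(1+q_{k+1}r_{k+2})}.$$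
   Context: For $|z|=1$ the Jost solution $\psi_n$ is the solution with $\psi_n=\begin{bmatrix}o(1)\\ z^n[1+o(1)]\end{bmatrix}$ as $n\to+\infty$, and $\bar\psi_n$ the solution with $\bar\psi_n=\begin{bmatrix}z^{-n}[1+o(1)]\\ o(1)\end{bmatrix}$ as $n\to+\infty$ (overbar is not complex conjugation). The transmission coefficients $T$, $\bar T$ are defined on $|z|=1$ by: the second component of $\psi_n$ equals $(1/T)z^n[1+o(1)]$ as $n\to-\infty$, and the first component of $\bar\psi_n$ equals $(1/\bar T)z^{-n}[1+o(1)]$ as $n\to-\infty$. (For this system the left and right transmission coefficients coincide.) *)

theory Defs
  imports "HOL-Analysis.Analysis" "HOL-Library.Landau_Symbols"
begin

definition AL_sol :: "(int \<Rightarrow> complex) \<Rightarrow> (int \<Rightarrow> complex) \<Rightarrow> complex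
    \<Rightarrow> (int \<Rightarrow> complex) \<times> (int \<Rightarrow> complex) \<Rightarrow> bool" where
  "AL_sol q r z ab \<longleftrightarrow>
     (\<forall>n. fst ab n = z * fst ab (n+1) + (z - inverse z) * q n * snd ab (n+1)
        \<and> snd ab n = z * r n * fst ab (n+1)
                     + (inverse z + (z - inverse z) * q n * r n) * snd ab (n+1))"

text \<open>Jost solution psi: z^(-n) psi_n \<rightarrow> (0,1) as n \<rightarrow> +\<infinity>
  (for |z| = 1 this is psi_n = (o(1), z^n (1+o(1)))).\<close>
definition jost_psi :: "(int \<Rightarrow> complex) \<Rightarrow> (int \<Rightarrow> complex) \<Rightarrow> complex
    \<Rightarrow> (int \<Rightarrow> complex) \<times> (int \<Rightarrow> complex)" where
  "jost_psi q r z = (THE ab. AL_sol q r z ab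
      \<and> ((\<lambda>n. z powi (-n) * fst ab n) \<longlongrightarrow> 0) at_top
      \<and> ((\<lambda>n. z powi (-n) * snd ab n) \<longlongrightarrow> 1) at_top)"

text \<open>Jost solution psi-bar: z^n psi-bar_n \<rightarrow> (1,0) as n \<rightarrow> +\<infinity>
  (for |z| = 1 this is psi-bar_n = (z^(-n) (1+o(1)), o(1))).\<close>
definition jost_psibar :: "(int \<Rightarrow> complex) \<Rightarrow> (int \<Rightarrow> complex) \<Rightarrow> complex
    \<Rightarrow> (int \<Rightarrow> complex) \<times> (int \<Rightarrow> complex)" where
  "jost_psibar q r z = (THE ab. AL_sol q r z ab
      \<and> ((\<lambda>n. z powi n * fst ab n) \<longlongrightarrow> 1) at_top
      \<and> ((\<lambda>n. z powi n * snd ab n) \<longlongrightarrow> 0) at_top)"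

text \<open>On |z| = 1 this is the defining
  asymptotics; for 0 < |z| < 1 (resp. |z| > 1) the same formula gives the
  analytic (meromorphic) continuation of T (resp. Tbar).\<close>
definition transT :: "(int \<Rightarrow> complex) \<Rightarrow> (int \<Rightarrow> complex) \<Rightarrow> complex \<Rightarrow> complex" where
  "transT q r z = 1 / Lim at_bot (\<lambda>n. z powi (-n) * snd (jost_psi q r z) n)"

definition transTbar :: "(int \<Rightarrow> complex) \<Rightarrow> (int \<Rightarrow> complex) \<Rightarrow> complex \<Rightarrow> complex" where
  "transTbar q r z = 1 / Lim at_bot (\<lambda>n. z powi n * fst (jost_psibar q r z) n)"

definition int_prod :: "(int \<Rightarrow> complex) \<Rightarrow> complex" where
  "int_prod f = lim (\<lambda>N::nat. \<Prod>j\<in>{-int N..int N}. f j)"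

end

(*
  For small |z| write the Jost solution as psi_n = z^n P_n (t_n, u_n) with
  P_n = prod_{j >= n} (1 - q_j r_j), and for large |z| write
  psi-bar_n = z^(-n) P_n (u_n, z^(-2) t_n + r_n u_n) with P_n = prod_{j >= n} (1 + q_j r_{j+1}).
  In both cases (t, u) solves a system
    lam_n t_n = w t_{n+1} + a_n u_{n+1},   lam_n (u_n - u_{n+1}) = w (c_n u_{n+1} + b_n t_{n+1})
  with w = z^2 resp. w = z^(-2) and summable coefficients. For small w, fixed-point iteration yields
  a solution with t -> 0 and u -> 1 at +infinity, and a constant Wronskian identifies it with the
  Jost solution. Hence 1/T = lim_{n -> -infinity} P_n u_n = D (1 + w sum_k g_k), where g_k is the
  coupling term of the u-equation; replacing (t, u) in g_k by its leading order (a_n / lam_n, 1)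
  costs O(w), so 1/T = D (1 + z^2 S + O(z^4)), and T follows by inversion. For T-bar the leading
  series differs from Q by a telescoping sum.
*)

theory Submission
  imports Defs
begin

lemma summable_on_norm_dominated:
  fixes f :: "'a \<Rightarrow> 'b::banach"
  assumes "g summable_on A" "\<And>x. x \<in> A \<Longrightarrow> norm (f x) \<le> g x"
  shows "f summable_on A"
  by (rule abs_summable_summable[OF Infinite_Sum.abs_summable_on_comparison_test'[OF assms]])

lemma norm_infsum_dominated:
  fixes f :: "'a \<Rightarrow> 'b::banach"
  assumes "g summable_on A" "\<And>x. x \<in> A \<Longrightarrow> norm (f x) \<le> g x"
  shows "norm (infsum f A) \<le> infsum g A"
  using assms summable_on_norm_dominated[OF assms]
  by (intro norm_infsum_le[OF has_sum_infsum has_sum_infsum]) auto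

lemma infsum_diff:
  fixes f g :: "'a \<Rightarrow> 'b::{topological_ab_group_add, t2_space}"
  assumes "f summable_on A" "g summable_on A"
  shows "infsum (\<lambda>x. f x - g x) A = infsum f A - infsum g A"
  using infsum_add[OF assms(1) summable_on_uminus[THEN iffD2, OF assms(2)]]
  by (simp add: infsum_uminus)

lemma summable_on_diff:
  fixes f g :: "'a \<Rightarrow> 'b::topological_ab_group_add"
  assumes "f summable_on A" "g summable_on A"
  shows "(\<lambda>x. f x - g x) summable_on A"
  using summable_on_add[OF assms(1) summable_on_uminus[THEN iffD2, OF assms(2)]] by simp

lemma summable_on_int_shift_iff:
  fixes f :: "int \<Rightarrow> 'a::{topological_comm_monoid_add, t2_space}"
  shows "(\<lambda>n. f (n + c)) summable_on UNIV \<longleftrightarrow> f summable_on UNIV"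
  by (rule summable_on_reindex_bij_betw) (auto intro!: bij_betwI[where g = "\<lambda>n. n - c"])

lemma infsum_int_shift:
  fixes f :: "int \<Rightarrow> 'a::{topological_comm_monoid_add, t2_space}"
  shows "infsum (\<lambda>n. f (n + c)) UNIV = infsum f UNIV"
  by (rule infsum_reindex_bij_betw) (auto intro!: bij_betwI[where g = "\<lambda>n. n - c"])

lemma infsum_int_telescoping:
  fixes f h :: "int \<Rightarrow> 'a::{topological_ab_group_add, t2_space}"
  assumes "f summable_on UNIV" "h summable_on UNIV"
  shows "(\<Sum>\<^sub>\<infinity>k. f k - h k + h (k+1)) = infsum f UNIV"
proof -
  have "(\<lambda>k. h (k+1)) summable_on UNIV" using assms(2) summable_on_int_shift_iff[of h 1] by simp
  then have "(\<Sum>\<^sub>\<infinity>k. f k - h k + h (k+1)) = infsum f UNIV - infsum h UNIV + infsum (\<lambda>k. h (k+1)) UNIV"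
    using infsum_add[OF summable_on_diff[OF assms]] infsum_diff[OF assms] by simp
  then show ?thesis by (simp add: infsum_int_shift)
qed

lemma infsum_int_atLeast_split:
  fixes f :: "int \<Rightarrow> 'a::{topological_comm_monoid_add, t2_space}"
  assumes "f summable_on {n+1..}"
  shows "infsum f {n..} = f n + infsum f {n+1..}"
proof -
  have "{n..} = insert n {n+1..}" by auto
  then show ?thesis using infsum_insert[OF assms] by simp
qed

lemma small_infsum_off_finite_set:
  fixes f :: "'a \<Rightarrow> 'b::banach"
  assumes "(\<lambda>x. norm (f x)) summable_on UNIV" "0 < \<epsilon>"
  obtains F where "finite F" "\<And>B. B \<inter> F = {} \<Longrightarrow> norm (infsum f B) \<le> \<epsilon>"
proof -
  let ?g = "\<lambda>x. norm (f x)"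
  obtain F where F: "finite F" "dist (sum ?g F) (infsum ?g UNIV) \<le> \<epsilon>"
    using infsum_finite_approximation[OF assms] by blast
  have "infsum ?g UNIV = infsum ?g F + infsum ?g (UNIV - F)"
    using infsum_Un_disjoint[of ?g F "UNIV - F"] F(1) summable_on_subset_banach[OF assms(1)]
    by (simp add: Un_absorb1)
  then have rest: "infsum ?g (UNIV - F) \<le> \<epsilon>" using F by (simp add: dist_real_def)
  have "norm (infsum f B) \<le> \<epsilon>" if "B \<inter> F = {}" for B
  proof -
    have "norm (infsum f B) \<le> infsum ?g B"
      by (rule norm_infsum_dominated) (use summable_on_subset_banach[OF assms(1)] in auto)
    also have "\<dots> \<le> infsum ?g (UNIV - F)"
      using that by (intro infsum_mono_neutral summable_on_subset_banach[OF assms(1)]) auto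
    finally show ?thesis using rest by simp
  qed
  then show ?thesis using that F(1) by blast
qed

lemma infsum_int_atLeast_tendsto:
  fixes f :: "int \<Rightarrow> 'a::banach"
  assumes "(\<lambda>n. norm (f n)) summable_on UNIV"
  shows "((\<lambda>n. infsum f {n..}) \<longlongrightarrow> 0) at_top"
    and "((\<lambda>n. infsum f {n..}) \<longlongrightarrow> infsum f UNIV) at_bot"
proof -
  have f: "f summable_on A" for A
    using summable_on_subset_banach[OF abs_summable_summable[OF assms]] by blast
  show "((\<lambda>n. infsum f {n..}) \<longlongrightarrow> 0) at_top"
  proof (rule tendstoI)
    fix \<epsilon> :: real assume "0 < \<epsilon>"
    then obtain F where F: "finite F" "\<And>B. B \<inter> F = {} \<Longrightarrow> norm (infsum f B) \<le> \<epsilon>/2"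
      using small_infsum_off_finite_set[OF assms, of "\<epsilon>/2"] by auto
    have "\<forall>\<^sub>F n in at_top. \<forall>x\<in>F. x < n"
      using F(1) by (simp add: eventually_ball_finite eventually_gt_at_top)
    then show "\<forall>\<^sub>F n in at_top. dist (infsum f {n..}) 0 < \<epsilon>"
      by eventually_elim (use F(2) \<open>0 < \<epsilon>\<close> in \<open>force simp: disjoint_iff\<close>)
  qed
  show "((\<lambda>n. infsum f {n..}) \<longlongrightarrow> infsum f UNIV) at_bot"
  proof (rule tendstoI)
    fix \<epsilon> :: real assume "0 < \<epsilon>"
    then obtain F where F: "finite F" "\<And>B. B \<inter> F = {} \<Longrightarrow> norm (infsum f B) \<le> \<epsilon>/2"
      using small_infsum_off_finite_set[OF assms, of "\<epsilon>/2"] by auto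
    have "\<forall>\<^sub>F n in at_bot. \<forall>x\<in>F. n \<le> x"
      using F(1) by (simp add: eventually_ball_finite eventually_le_at_bot)
    then show "\<forall>\<^sub>F n in at_bot. dist (infsum f {n..}) (infsum f UNIV) < \<epsilon>"
    proof eventually_elim
      case (elim n)
      have "infsum f UNIV = infsum f {..<n} + infsum f {n..}"
        by (subst infsum_Un_disjoint[OF f f, symmetric]) (auto intro!: arg_cong[where f = "infsum f"])
      then have "dist (infsum f {n..}) (infsum f UNIV) = norm (infsum f {..<n})"
        by (simp add: dist_norm norm_minus_commute)
      also have "\<dots> \<le> \<epsilon>/2" using elim by (intro F(2)) force
      finally show ?case using \<open>0 < \<epsilon>\<close> by simp
    qed
  qed
qed

lemma summable_on_int_tendsto_0:
  fixes f :: "int \<Rightarrow> 'a::banach"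
  assumes "(\<lambda>n. norm (f n)) summable_on UNIV"
  shows "(f \<longlongrightarrow> 0) at_top" and "(f \<longlongrightarrow> 0) at_bot"
proof -
  have f: "f summable_on A" for A
    using summable_on_subset_banach[OF abs_summable_summable[OF assms]] by blast
  have diff: "(\<lambda>n. infsum f {n..} - infsum f {n+1..}) = f"
  proof
    show "infsum f {n..} - infsum f {n+1..} = f n" for n
      using infsum_int_atLeast_split[OF f, of n] by simp
  qed
  have succ_top: "filterlim (\<lambda>n::int. n + 1) at_top at_top"
    by (rule filterlim_at_top_mono[OF filterlim_ident]) auto
  have succ_bot: "filterlim (\<lambda>n::int. n + 1) at_bot at_bot"
    unfolding filterlim_at_bot eventually_at_bot_linorder
  proof
    show "\<exists>N. \<forall>n\<le>N. n + 1 \<le> Z" for Z :: int by (rule exI[of _ "Z - 1"]) auto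
  qed
  note tails = infsum_int_atLeast_tendsto[OF assms]
  show "(f \<longlongrightarrow> 0) at_top"
    using tendsto_diff[OF tails(1) filterlim_compose[OF tails(1) succ_top]] by (simp add: diff)
  show "(f \<longlongrightarrow> 0) at_bot"
    using tendsto_diff[OF tails(2) filterlim_compose[OF tails(2) succ_bot]] by (simp add: diff)
qed

lemma summable_on_int_iff_nat_halves:
  fixes f :: "int \<Rightarrow> real"
  assumes "\<And>n. 0 \<le> f n"
  shows "f summable_on UNIV \<longleftrightarrow> summable (\<lambda>i. f (int i)) \<and> summable (\<lambda>i. f (- int i - 1))"
proof -
  let ?neg = "\<lambda>i::nat. - int i - 1"
  have inj: "inj int" "inj ?neg" by (auto simp: inj_def)
  have halves: "f summable_on range int \<longleftrightarrow> summable (\<lambda>i. f (int i))"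
    "f summable_on range ?neg \<longleftrightarrow> summable (\<lambda>i. f (?neg i))"
    by (simp_all add: summable_on_reindex inj o_def summable_on_UNIV_nonneg_real_iff assms)
  have cover: "UNIV = range int \<union> range ?neg"
  proof -
    have "n \<in> range int \<union> range ?neg" for n :: int
      by (cases "0 \<le> n") (auto intro: image_eqI[where x = "nat n"] image_eqI[where x = "nat (- n - 1)"])
    then show ?thesis by auto
  qed
  have "f summable_on UNIV \<longleftrightarrow> f summable_on range int \<and> f summable_on range ?neg"
  proof
    assume "f summable_on UNIV"
    then show "f summable_on range int \<and> f summable_on range ?neg"
      using summable_on_subset_banach by blast
  next
    assume "f summable_on range int \<and> f summable_on range ?neg"
    then show "f summable_on UNIV" by (subst cover) (blast intro: summable_on_union)
  qed
  then show ?thesis unfolding halves .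
qed

lemma summable_norm_if_square_decay:
  fixes f :: "nat \<Rightarrow> 'a::real_normed_field" and g :: "nat \<Rightarrow> int"
  assumes decay: "(\<lambda>i. of_int (g i) ^ 2 * f i) \<longlonglongrightarrow> 0" and growth: "\<And>i. real i \<le> \<bar>g i\<bar>"
  shows "summable (\<lambda>i. norm (f i))"
proof (rule summable_comparison_test_ev[OF _ inverse_power_summable[of 2]])
  have "\<forall>\<^sub>F i in sequentially. norm (of_int (g i) ^ 2 * f i) < 1"
    using order_tendstoD(2)[OF tendsto_norm[OF decay]] by simp
  then show "\<forall>\<^sub>F i in sequentially. norm (norm (f i)) \<le> inverse (real i ^ 2)"
    using eventually_gt_at_top[of "0::nat"]
  proof eventually_elim
    case (elim i)
    have "real i ^ 2 * norm (f i) \<le> of_int (g i) ^ 2 * norm (f i)"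
      using growth[of i] by (intro mult_right_mono power_mono_even) auto
    also have "\<dots> < 1" using elim by (simp add: norm_mult norm_power)
    finally show ?case using elim by (simp add: field_simps)
  qed
qed simp

lemma summable_on_int_if_square_decay:
  fixes f :: "int \<Rightarrow> 'a::real_normed_field"
  assumes top: "((\<lambda>n. of_int n ^ 2 * f n) \<longlongrightarrow> 0) at_top"
      and bot: "((\<lambda>n. of_int n ^ 2 * f n) \<longlongrightarrow> 0) at_bot"
  shows "(\<lambda>n. norm (f n)) summable_on UNIV"
proof -
  have neg_bot: "filterlim (\<lambda>i::nat. - int i - 1) at_bot sequentially"
    unfolding filterlim_at_bot eventually_sequentially
  proof
    show "\<exists>N. \<forall>i\<ge>N. - int i - 1 \<le> Z" for Z :: int by (rule exI[of _ "nat (- Z)"]) auto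
  qed
  have "summable (\<lambda>i. norm (f (int i)))"
    by (rule summable_norm_if_square_decay[where g = int])
      (use filterlim_compose[OF top filterlim_int_sequentially] in auto)
  moreover have "summable (\<lambda>i. norm (f (- int i - 1)))"
    by (rule summable_norm_if_square_decay[where g = "\<lambda>i. - int i - 1"])
      (use filterlim_compose[OF bot neg_bot] in auto)
  ultimately show ?thesis by (simp add: summable_on_int_iff_nat_halves)
qed

lemma bounded_away_from_0_int:
  fixes f :: "int \<Rightarrow> 'a::{banach, real_normed_algebra_1}"
  assumes nonzero: "\<And>n. f n \<noteq> 0" and summable: "(\<lambda>n. norm (f n - 1)) summable_on UNIV"
  obtains \<delta> where "0 < \<delta>" "\<And>n. \<delta> \<le> norm (f n)"
proof -
  have top: "(f \<longlongrightarrow> 1) at_top" and bot: "(f \<longlongrightarrow> 1) at_bot"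
    using summable_on_int_tendsto_0[OF summable] by (simp_all add: LIM_zero_iff)
  have "\<forall>\<^sub>F n in at_top. 1/2 < norm (f n)" "\<forall>\<^sub>F n in at_bot. 1/2 < norm (f n)"
    using order_tendstoD(1)[OF tendsto_norm[OF top], of "1/2"] order_tendstoD(1)[OF tendsto_norm[OF bot], of "1/2"]
    by simp_all
  then obtain N1 N2 where N1: "\<And>n. n \<ge> N1 \<Longrightarrow> 1/2 < norm (f n)"
      and N2: "\<And>n. n \<le> N2 \<Longrightarrow> 1/2 < norm (f n)"
    unfolding eventually_at_top_linorder eventually_at_bot_linorder by blast
  define S where "S = insert (1/2) ((\<lambda>n. norm (f n)) ` {N2..N1})"
  have "finite S" by (simp add: S_def)
  have "0 < Min S"
    using \<open>finite S\<close> nonzero by (subst Min_gr_iff) (auto simp: S_def)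
  moreover have "Min S \<le> norm (f n)" for n
  proof (cases "n \<in> {N2..N1}")
    case True
    then show ?thesis using \<open>finite S\<close> by (intro Min_le) (auto simp: S_def)
  next
    case False
    then have "1/2 < norm (f n)" using N1 N2 by (cases "n \<ge> N1") auto
    moreover have "Min S \<le> 1/2" using \<open>finite S\<close> by (intro Min_le) (auto simp: S_def)
    ultimately show ?thesis by simp
  qed
  ultimately show ?thesis using that by blast
qed

lemma geometric_Cauchy:
  fixes f :: "nat \<Rightarrow> 'a::banach"
  assumes steps: "\<And>j. norm (f (Suc j) - f j) \<le> C / 2^j"
  shows "f \<longlonglongrightarrow> lim f" and "\<And>j. norm (f j - lim f) \<le> 2 * C / 2^j"
proof -
  define d where "d j = f (Suc j) - f j" for j
  have d_le: "norm (d j) \<le> C * (1/2)^j" for j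
    using steps[of j] by (simp add: d_def power_one_over)
  have geometric: "summable (\<lambda>j. C * (1/2::real)^j)"
    by (intro summable_mult summable_geometric) auto
  have "summable d"
    by (rule summable_comparison_test[OF _ geometric]) (use d_le in auto)
  have partial: "f j = f 0 + (\<Sum>i<j. d i)" for j
    unfolding d_def sum_lessThan_telescope by simp
  have "(\<lambda>j. f 0 + (\<Sum>i<j. d i)) \<longlonglongrightarrow> f 0 + suminf d"
    by (intro tendsto_add tendsto_const summable_LIMSEQ[OF \<open>summable d\<close>])
  then have lim: "f \<longlonglongrightarrow> f 0 + suminf d" by (simp add: partial[symmetric])
  then show "f \<longlonglongrightarrow> lim f" by (simp add: limI)
  fix j
  have "suminf d = (\<Sum>i. d (i + j)) + sum d {..<j}"
    by (rule suminf_split_initial_segment[OF \<open>summable d\<close>])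
  then have "norm (f j - lim f) = norm (\<Sum>i. d (i + j))"
    using limI[OF lim] partial[of j] by (simp add: norm_minus_commute)
  also have "\<dots> \<le> (\<Sum>i. C / 2^j * (1/2)^i)"
  proof (rule norm_suminf_le)
    show "norm (d (i + j)) \<le> C / 2^j * (1/2)^i" for i
      using d_le[of "i + j"] by (simp add: power_add power_one_over mult.commute)
    show "summable (\<lambda>i. C / 2 ^ j * (1 / 2) ^ i)"
      by (intro summable_mult summable_geometric) auto
  qed
  also have "\<dots> = 2 * C / 2^j"
    using suminf_mult[of "\<lambda>i. (1/2::real)^i" "C/2^j"] suminf_geometric[of "1/2::real"]
    by (simp add: summable_geometric)
  finally show "norm (f j - lim f) \<le> 2 * C / 2^j" .
qed

lemma norm_inverse_one_plus_le:
  fixes y e :: "'a::real_normed_field"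
  assumes y: "norm y \<le> 1/4" and e: "norm e \<le> 1/4"
  shows "norm (1 / (1 + y + e) - (1 - y)) \<le> 2 * (2 * norm e + norm y ^ 2)"
proof -
  have "1 \<le> norm (1 + y + e) + norm y + norm e"
    using norm_triangle_ineq4[of "1 + y + e" "y + e"] norm_triangle_ineq[of y e] by (simp add: algebra_simps)
  then have L: "1/2 \<le> norm (1 + y + e)" using y e by simp
  then have "1 + y + e \<noteq> 0" by auto
  then have "1 / (1 + y + e) - (1 - y) = (y^2 - e + y * e) / (1 + y + e)"
    by (simp add: field_simps power2_eq_square)
  also have "norm \<dots> = norm (y^2 - e + y * e) / norm (1 + y + e)" by (rule norm_divide)
  also have "\<dots> \<le> (norm y ^ 2 + 2 * norm e) / (1/2)"
  proof (rule frac_le)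
    have "norm (y * e) \<le> norm e" using y by (simp add: norm_mult mult_left_le_one_le)
    then show "norm (y^2 - e + y * e) \<le> norm y ^ 2 + 2 * norm e"
      using norm_triangle_ineq[of "y^2 - e" "y * e"] norm_triangle_ineq4[of "y^2" e]
      by (simp add: norm_power)
  qed (use L in auto)
  finally show ?thesis by simp
qed

lemma reciprocal_expansion:
  fixes w f :: "'a \<Rightarrow> complex"
  assumes w: "(w \<longlongrightarrow> 0) F" and "D \<noteq> 0"
    and approx: "\<forall>\<^sub>F x in F. \<exists>L. f x = 1 / (D * L) \<and> norm (L - 1 - w x * X) \<le> K * norm (w x) ^ 2"
  shows "\<exists>R. R \<in> O[F](\<lambda>x. w x ^ 2) \<and> (\<forall>\<^sub>F x in F. f x = (1 - w x * X + R x) / D)"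
proof -
  define R where "R x = D * f x - (1 - w x * X)" for x
  have wX: "((\<lambda>x. w x * X) \<longlongrightarrow> 0) F" by (rule tendsto_mult_left_zero[OF w])
  have Kw: "((\<lambda>x. K * norm (w x) ^ 2) \<longlongrightarrow> 0) F"
    using tendsto_power[OF tendsto_norm_zero[OF w], of 2] by (intro tendsto_mult_right_zero) simp
  have small: "\<forall>\<^sub>F x in F. norm (w x * X) < 1/4" "\<forall>\<^sub>F x in F. K * norm (w x) ^ 2 < 1/4"
    by (rule order_tendstoD(2)[OF tendsto_norm_zero[OF wX]], simp)
      (rule order_tendstoD(2)[OF Kw], simp)
  have "\<forall>\<^sub>F x in F. norm (R x) \<le> 2 * (2 * K + norm X ^ 2) * norm (w x ^ 2)"
    using approx small
  proof eventually_elim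
    case (elim x)
    then obtain L where L: "f x = 1 / (D * L)" "norm (L - 1 - w x * X) \<le> K * norm (w x) ^ 2" by blast
    have "R x = 1 / (1 + w x * X + (L - 1 - w x * X)) - (1 - w x * X)"
      using \<open>D \<noteq> 0\<close> by (simp add: R_def L(1))
    also have "norm \<dots> \<le> 2 * (2 * norm (L - 1 - w x * X) + norm (w x * X) ^ 2)"
      by (rule norm_inverse_one_plus_le) (use elim L(2) in auto)
    also have "\<dots> \<le> 2 * (2 * (K * norm (w x) ^ 2) + norm X ^ 2 * norm (w x) ^ 2)"
      using L(2) by (simp add: norm_mult power_mult_distrib)
    finally show ?case by (simp add: norm_power algebra_simps)
  qed
  then have "R \<in> O[F](\<lambda>x. w x ^ 2)" by (rule bigoI)
  moreover have "\<forall>x. f x = (1 - w x * X + R x) / D"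
    using \<open>D \<noteq> 0\<close> by (simp add: R_def)
  ultimately show ?thesis by (intro exI[of _ R] conjI always_eventually)
qed

lemma prod_int_symmetric_split:
  "(\<Prod>j\<in>{- int N..int N}. f j) = (\<Prod>i<N. f (- int i - 1)) * (\<Prod>i<Suc N. f (int i))"
proof (induction N)
  case (Suc N)
  have "{- int (Suc N)..int (Suc N)} = insert (- int N - 1) (insert (int (Suc N)) {- int N..int N})"
    by auto
  then show ?case by (simp add: Suc.IH ac_simps)
qed simp

lemma tendsto_at_top_int_if_nat:
  assumes "h \<longlonglongrightarrow> L" "\<forall>\<^sub>F n in at_top. f n = h (nat n)"
  shows "(f \<longlongrightarrow> L) at_top"
  using filterlim_compose[OF assms(1) filterlim_nat_sequentially] tendsto_cong[OF assms(2)] by simp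

lemma tendsto_at_bot_int_if_nat:
  assumes "h \<longlonglongrightarrow> L" "\<forall>\<^sub>F n in at_bot. f n = h (nat (- n))"
  shows "(f \<longlongrightarrow> L) at_bot"
proof -
  have "filterlim (\<lambda>n::int. nat (- n)) sequentially at_bot"
    unfolding filterlim_at_top eventually_at_bot_linorder
  proof
    show "\<exists>N. \<forall>n\<le>N. Z \<le> nat (- n)" for Z :: nat by (rule exI[of _ "- int Z"]) auto
  qed
  from filterlim_compose[OF assms(1) this] show ?thesis using tendsto_cong[OF assms(2)] by simp
qed

lemma int_prod_halves:
  fixes lam :: "int \<Rightarrow> complex"
  assumes nonzero: "\<And>n. lam n \<noteq> 0" and summable: "(\<lambda>n. norm (lam n - 1)) summable_on UNIV"
  defines "A \<equiv> prodinf (\<lambda>i. lam (int i))" and "B \<equiv> prodinf (\<lambda>i. lam (- int i - 1))"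
  shows "(\<lambda>m. \<Prod>i<m. lam (int i)) \<longlonglongrightarrow> A" "(\<lambda>m. \<Prod>i<m. lam (- int i - 1)) \<longlonglongrightarrow> B"
    and "A \<noteq> 0" "B \<noteq> 0" "int_prod lam = B * A"
proof -
  have "summable (\<lambda>i. norm (lam (int i) - 1))" "summable (\<lambda>i. norm (lam (- int i - 1) - 1))"
    using summable by (simp_all add: summable_on_int_iff_nat_halves)
  then have conv: "convergent_prod (\<lambda>i. lam (int i))" "convergent_prod (\<lambda>i. lam (- int i - 1))"
    by (auto intro: abs_convergent_prod_imp_convergent_prod summable_imp_abs_convergent_prod)
  show "A \<noteq> 0" "B \<noteq> 0" unfolding A_def B_def using prodinf_nonzero[OF conv(1)] prodinf_nonzero[OF conv(2)]
    by (simp_all add: nonzero)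
  show lim: "(\<lambda>m. \<Prod>i<m. lam (int i)) \<longlonglongrightarrow> A" "(\<lambda>m. \<Prod>i<m. lam (- int i - 1)) \<longlonglongrightarrow> B"
    unfolding A_def B_def LIMSEQ_lessThan_iff_atMost by (simp_all add: convergent_prod_LIMSEQ conv)
  have "(\<lambda>N. \<Prod>j\<in>{- int N..int N}. lam j) \<longlonglongrightarrow> B * A"
    unfolding prod_int_symmetric_split by (rule tendsto_mult[OF lim(2) LIMSEQ_Suc[OF lim(1)]])
  then show "int_prod lam = B * A" unfolding int_prod_def by (rule limI)
qed

lemma int_prod_tails:
  fixes lam :: "int \<Rightarrow> complex"
  assumes nonzero: "\<And>n. lam n \<noteq> 0" and summable: "(\<lambda>n. norm (lam n - 1)) summable_on UNIV"
  obtains P where "\<And>n. P n = lam n * P (n+1)" "(P \<longlongrightarrow> 1) at_top" "(P \<longlongrightarrow> int_prod lam) at_bot"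
    "int_prod lam \<noteq> 0"
proof -
  define fp where "fp i = lam (int i)" for i
  define fm where "fm i = lam (- int i - 1)" for i
  define A where "A = prodinf fp"
  define B where "B = prodinf fm"
  have lim_fp: "(\<lambda>m. \<Prod>i<m. fp i) \<longlonglongrightarrow> A" and lim_fm: "(\<lambda>m. \<Prod>i<m. fm i) \<longlonglongrightarrow> B"
    and "A \<noteq> 0" "B \<noteq> 0" and prod: "int_prod lam = B * A"
    using int_prod_halves[OF nonzero summable] by (simp_all add: fp_def[abs_def] fm_def[abs_def] A_def B_def)
  define P where
    "P n = (if 0 \<le> n then A / (\<Prod>i<nat n. fp i) else (\<Prod>i<nat (- n). fm i) * A)" for n
  have "P n = lam n * P (n+1)" for n
  proof (cases "0 \<le> n")
    case True
    then have "(\<Prod>i<nat (n+1). fp i) = (\<Prod>i<nat n. fp i) * lam n"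
      by (simp add: nat_add_distrib fp_def)
    moreover have "(\<Prod>i<nat n. fp i) \<noteq> 0" by (simp add: fp_def nonzero)
    ultimately show ?thesis using True nonzero[of n] by (simp add: P_def field_simps)
  next
    case False
    then have "nat (- n) = Suc (nat (- (n+1)))" by simp
    then have "(\<Prod>i<nat (- n). fm i) = (\<Prod>i<nat (- (n+1)). fm i) * lam n"
      using False by (simp add: fm_def)
    then show ?thesis using False by (cases "n = -1") (simp_all add: P_def fm_def ac_simps)
  qed
  moreover have "(P \<longlongrightarrow> 1) at_top"
  proof (rule tendsto_at_top_int_if_nat)
    show "(\<lambda>m. A / (\<Prod>i<m. fp i)) \<longlonglongrightarrow> 1"
      using tendsto_divide[OF tendsto_const lim_fp \<open>A \<noteq> 0\<close>, of A] \<open>A \<noteq> 0\<close> by simp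
    show "\<forall>\<^sub>F n in at_top. P n = A / (\<Prod>i<nat n. fp i)"
      using eventually_ge_at_top[of 0] by eventually_elim (simp add: P_def)
  qed
  moreover have "(P \<longlongrightarrow> int_prod lam) at_bot"
  proof (rule tendsto_at_bot_int_if_nat)
    show "(\<lambda>m. (\<Prod>i<m. fm i) * A) \<longlonglongrightarrow> int_prod lam"
      unfolding prod by (rule tendsto_mult[OF lim_fm tendsto_const])
    show "\<forall>\<^sub>F n in at_bot. P n = (\<Prod>i<nat (- n). fm i) * A"
      using eventually_le_at_bot[of "-1"] by eventually_elim (simp add: P_def)
  qed
  moreover have "int_prod lam \<noteq> 0" using prod \<open>A \<noteq> 0\<close> \<open>B \<noteq> 0\<close> by simp
  ultimately show ?thesis using that by blast
qed

lemma leading_term_summable: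
  fixes lam a b c :: "int \<Rightarrow> complex" and \<kappa> :: "int \<Rightarrow> real"
  assumes kappa: "\<And>n. 0 \<le> \<kappa> n" "\<kappa> summable_on UNIV" and lam: "0 < \<delta>" "\<And>n. \<delta> \<le> norm (lam n)"
    and le: "\<And>n. norm (a n) \<le> \<kappa> n" "\<And>n. norm (b n) \<le> \<kappa> n" "\<And>n. norm (c n) \<le> \<kappa> n"
  shows "(\<lambda>k. (c k + b k * (a (k+1) / lam (k+1))) / lam k) summable_on UNIV"
proof (rule summable_on_norm_dominated[OF summable_on_cmult_right[OF kappa(2)]])
  let ?E = "infsum \<kappa> UNIV"
  have div_le: "norm (x / lam n) \<le> norm x / \<delta>" for x n
  proof -
    have "0 < norm (lam n)" using lam(1) lam(2)[of n] by linarith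
    then show ?thesis
      unfolding norm_divide using lam by (intro divide_left_mono mult_pos_pos) auto
  qed
  fix k
  have "infsum \<kappa> {k+1} \<le> ?E"
    by (rule infsum_mono_neutral) (use kappa summable_on_subset_banach[OF kappa(2)] in auto)
  then have "\<kappa> (k+1) \<le> ?E" by simp
  have "norm (a (k+1) / lam (k+1)) \<le> norm (a (k+1)) / \<delta>" by (rule div_le)
  also have "\<dots> \<le> ?E / \<delta>"
    using le(1)[of "k+1"] \<open>\<kappa> (k+1) \<le> ?E\<close> lam(1) by (intro divide_right_mono) auto
  finally have "norm (b k * (a (k+1) / lam (k+1))) \<le> \<kappa> k * (?E / \<delta>)"
    unfolding norm_mult by (rule mult_mono[OF le(2)]) (use kappa in auto)
  then have "norm (c k + b k * (a (k+1) / lam (k+1))) \<le> \<kappa> k + \<kappa> k * (?E / \<delta>)"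
    using le(3)[of k] norm_triangle_ineq[of "c k" "b k * (a (k+1) / lam (k+1))"] by linarith
  then have "norm ((c k + b k * (a (k+1) / lam (k+1))) / lam k) \<le> (\<kappa> k + \<kappa> k * (?E / \<delta>)) / \<delta>"
    using div_le[of "c k + b k * (a (k+1) / lam (k+1))" k] lam(1)
    by (meson divide_right_mono less_imp_le order_trans)
  also have "\<dots> = (1 + ?E / \<delta>) / \<delta> * \<kappa> k" by (simp add: field_simps)
  finally show "norm ((c k + b k * (a (k+1) / lam (k+1))) / lam k) \<le> (1 + ?E / \<delta>) / \<delta> * \<kappa> k" .
qed

locale normal_form_system =
  fixes w :: complex and lam a b c :: "int \<Rightarrow> complex" and \<kappa> :: "int \<Rightarrow> real" and \<delta> :: real
  assumes kappa_nonneg: "\<And>n. 0 \<le> \<kappa> n"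
    and kappa_summable: "\<kappa> summable_on UNIV"
    and delta_pos: "0 < \<delta>" and delta_le_1: "\<delta> \<le> 1"
    and lam_ge: "\<And>n. \<delta> \<le> norm (lam n)"
    and a_le: "\<And>n. norm (a n) \<le> \<kappa> n"
    and b_le: "\<And>n. norm (b n) \<le> \<kappa> n"
    and c_le: "\<And>n. norm (c n) \<le> \<kappa> n"
    and w_small: "norm w * ((1 + infsum \<kappa> UNIV) / \<delta>) ^ 4 \<le> 1/10"
begin

text \<open>\<open>M\<close> dominates \<open>1\<close>, the total mass of \<open>\<kappa>\<close> and \<open>1 / \<delta>\<close>, so all constants below are powers of \<open>M\<close>.\<close>

definition M :: real where "M = (1 + infsum \<kappa> UNIV) / \<delta>"

definition tail :: "int \<Rightarrow> real" where "tail n = infsum \<kappa> {n..}"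

lemma kappa_summable_on: "\<kappa> summable_on A"
  by (rule summable_on_subset_banach[OF kappa_summable]) simp

lemma infsum_kappa_nonneg: "0 \<le> infsum \<kappa> A"
  by (rule infsum_nonneg) (use kappa_nonneg in auto)

lemma infsum_kappa_le_M: "infsum \<kappa> A \<le> M"
proof -
  have "infsum \<kappa> A \<le> infsum \<kappa> UNIV"
    by (rule infsum_mono_neutral) (use kappa_summable_on kappa_nonneg in auto)
  also have "\<dots> \<le> (1 + infsum \<kappa> UNIV) / 1" by simp
  also have "\<dots> \<le> M"
    unfolding M_def using delta_pos delta_le_1 infsum_kappa_nonneg[of UNIV]
    by (intro divide_left_mono) auto
  finally show ?thesis .
qed

lemma M_ge_1: "1 \<le> M"
  using delta_pos delta_le_1 infsum_kappa_nonneg[of UNIV] by (simp add: M_def field_simps)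

lemma M_power_mono: "k \<le> l \<Longrightarrow> M ^ k \<le> M ^ l"
  by (rule power_increasing[OF _ M_ge_1])

lemma tail_split: "tail n = \<kappa> n + tail (n+1)"
  unfolding tail_def by (rule infsum_int_atLeast_split[OF kappa_summable_on])

lemma kappa_le_tail: "\<kappa> n \<le> tail n"
  using tail_split[of n] infsum_kappa_nonneg[of "{n+1..}"] by (simp add: tail_def)

lemma tail_Suc_le: "tail (n+1) \<le> tail n"
  using tail_split[of n] kappa_nonneg[of n] by simp

lemma tail_tendsto_0: "(tail \<longlongrightarrow> 0) at_top"
  using infsum_int_atLeast_tendsto(1)[of \<kappa>] kappa_summable kappa_nonneg
  by (simp add: tail_def[abs_def])

lemma norm_divide_lam_le: "norm (z / lam n) \<le> M * norm z"
proof -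
  have "norm (z / lam n) = norm z / norm (lam n)" by (rule norm_divide)
  also have "\<dots> \<le> norm z / \<delta>"
    using delta_pos lam_ge[of n] by (intro divide_left_mono mult_pos_pos) auto
  also have "\<dots> \<le> M * norm z"
    using infsum_kappa_nonneg[of UNIV] delta_pos by (simp add: M_def field_simps)
  finally show ?thesis .
qed

lemma lam_nonzero: "lam n \<noteq> 0"
  using delta_pos lam_ge[of n] by auto

lemma w_M4_small: "norm w * M ^ 4 \<le> 1/10"
  using w_small by (simp add: M_def)

lemma M_w_small: "M * norm w \<le> 1/4"
  using mult_left_mono[OF M_power_mono[of 1 4] norm_ge_zero[of w]] w_M4_small by (simp add: mult.commute)

definition coupling :: "(int \<Rightarrow> complex) \<times> (int \<Rightarrow> complex) \<Rightarrow> int \<Rightarrow> complex" where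
  "coupling x k = (c k * snd x (k+1) + b k * fst x (k+1)) / lam k"

text \<open>The fixed-point form of the normal form system: \<open>t\<close> is solved for from the first equation,
  \<open>u\<close> by summing the second one from \<open>n\<close> to \<open>+\<infinity>\<close> with \<open>u\<close> tending to \<open>1\<close>.\<close>

definition step :: "(int \<Rightarrow> complex) \<times> (int \<Rightarrow> complex) \<Rightarrow> (int \<Rightarrow> complex) \<times> (int \<Rightarrow> complex)" where
  "step x = ((\<lambda>n. (w * fst x (n+1) + a n * snd x (n+1)) / lam n),
             (\<lambda>n. 1 + w * infsum (coupling x) {n..}))"

definition admissible :: "(int \<Rightarrow> complex) \<times> (int \<Rightarrow> complex) \<Rightarrow> bool" where
  "admissible x \<longleftrightarrow> (\<forall>n. norm (fst x n) \<le> 2 * M * tail n) \<and> (\<forall>n. norm (snd x n - 1) \<le> 1/2)"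

lemma coupling_diff_le:
  assumes "\<And>m. norm (fst x m - fst y m) \<le> T" "\<And>m. norm (snd x m - snd y m) \<le> U"
  shows "norm (coupling x k - coupling y k) \<le> M * (U + T) * \<kappa> k"
proof -
  have "coupling x k - coupling y k
      = (c k * (snd x (k+1) - snd y (k+1)) + b k * (fst x (k+1) - fst y (k+1))) / lam k"
    unfolding coupling_def by (simp add: diff_divide_distrib algebra_simps)
  also have "norm \<dots> \<le> M * norm (c k * (snd x (k+1) - snd y (k+1)) + b k * (fst x (k+1) - fst y (k+1)))"
    by (rule norm_divide_lam_le)
  also have "\<dots> \<le> M * (\<kappa> k * U + \<kappa> k * T)"
    using M_ge_1 norm_triangle_ineq[of "c k * (snd x (k+1) - snd y (k+1))" "b k * (fst x (k+1) - fst y (k+1))"]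
      mult_mono[OF c_le[of k] assms(2)[of "k+1"] kappa_nonneg norm_ge_zero]
      mult_mono[OF b_le[of k] assms(1)[of "k+1"] kappa_nonneg norm_ge_zero]
    by (intro mult_left_mono) (auto simp: norm_mult)
  finally show ?thesis by (simp add: algebra_simps)
qed

lemma admissible_le:
  assumes "admissible x"
  shows "norm (fst x m) \<le> 2 * M^2" and "norm (snd x m) \<le> 3/2"
proof -
  have "norm (fst x m) \<le> 2 * M * tail m" using assms by (simp add: admissible_def)
  also have "\<dots> \<le> 2 * M * M"
    using M_ge_1 infsum_kappa_le_M[of "{m..}"] by (intro mult_left_mono) (auto simp: tail_def)
  finally show "norm (fst x m) \<le> 2 * M^2" by (simp add: power2_eq_square)
  have "norm (snd x m - 1) \<le> 1/2" using assms unfolding admissible_def by blast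
  then show "norm (snd x m) \<le> 3/2" using norm_triangle_sub[of "snd x m" 1] by simp
qed

lemma coupling_le:
  assumes "admissible x"
  shows "norm (coupling x k) \<le> 4 * M^3 * \<kappa> k"
proof -
  have "coupling (\<lambda>_. 0, \<lambda>_. 0) k = 0" by (simp add: coupling_def)
  then have "norm (coupling x k) \<le> M * (3/2 + 2 * M^2) * \<kappa> k"
    using coupling_diff_le[of x "(\<lambda>_. 0, \<lambda>_. 0)" "2 * M^2" "3/2" k] admissible_le[OF assms] by simp
  also have "\<dots> = (3/2 * M + 2 * M^3) * \<kappa> k" by (simp add: power2_eq_square power3_eq_cube algebra_simps)
  also have "\<dots> \<le> 4 * M^3 * \<kappa> k"
    using M_power_mono[of 1 3] M_ge_1 kappa_nonneg[of k] by (intro mult_right_mono) auto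
  finally show ?thesis .
qed

lemma coupling_summable: "admissible x \<Longrightarrow> coupling x summable_on A"
  by (rule summable_on_norm_dominated[OF summable_on_cmult_right[OF kappa_summable_on]]) (rule coupling_le)

lemma norm_infsum_coupling_le:
  assumes "admissible x"
  shows "norm (infsum (coupling x) A) \<le> 4 * M^4"
proof -
  have "norm (infsum (coupling x) A) \<le> infsum (\<lambda>k. 4 * M^3 * \<kappa> k) A"
    by (rule norm_infsum_dominated[OF summable_on_cmult_right[OF kappa_summable_on]])
      (rule coupling_le[OF assms])
  also have "\<dots> = 4 * M^3 * infsum \<kappa> A" by (rule infsum_cmult_right')
  also have "\<dots> \<le> 4 * M^3 * M" using infsum_kappa_le_M M_ge_1 by (intro mult_left_mono) auto
  also have "\<dots> = 4 * M^4" by (simp add: eval_nat_numeral)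
  finally show ?thesis .
qed

lemma norm_infsum_coupling_diff_le:
  assumes "admissible x" "admissible y"
    and "\<And>m. norm (fst x m - fst y m) \<le> T" "\<And>m. norm (snd x m - snd y m) \<le> U"
  shows "norm (infsum (coupling x) A - infsum (coupling y) A) \<le> M^2 * (U + T)"
proof -
  have UT: "0 \<le> U + T" using assms(3,4)[of 0] norm_ge_zero by (smt (verit))
  have "infsum (coupling x) A - infsum (coupling y) A = infsum (\<lambda>k. coupling x k - coupling y k) A"
    using infsum_diff[OF coupling_summable coupling_summable] assms(1,2) by simp
  also have "norm \<dots> \<le> infsum (\<lambda>k. M * (U + T) * \<kappa> k) A"
    by (rule norm_infsum_dominated[OF summable_on_cmult_right[OF kappa_summable_on]])
      (rule coupling_diff_le[OF assms(3,4)])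
  also have "\<dots> = M * (U + T) * infsum \<kappa> A" by (rule infsum_cmult_right')
  also have "\<dots> \<le> M * (U + T) * M"
    using infsum_kappa_le_M M_ge_1 UT by (intro mult_left_mono) auto
  finally show ?thesis by (simp add: power2_eq_square algebra_simps)
qed

lemma step_admissible:
  assumes "admissible x"
  shows "admissible (step x)"
  unfolding admissible_def
proof (intro allI conjI)
  fix n
  have "norm (w * fst x (n+1) + a n * snd x (n+1)) \<le> norm w * (2 * M * tail n) + tail n * (3/2)"
  proof -
    have "norm (fst x (n+1)) \<le> 2 * M * tail n"
      using assms tail_Suc_le[of n] M_ge_1 unfolding admissible_def
      by (smt (verit) mult_left_mono)
    moreover have "norm (a n) \<le> tail n" using a_le kappa_le_tail order_trans by blast
    ultimately show ?thesis
      using norm_triangle_ineq[of "w * fst x (n+1)" "a n * snd x (n+1)"] admissible_le(2)[OF assms]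
      by (smt (verit) mult_left_mono mult_mono norm_ge_zero norm_mult)
  qed
  also have "\<dots> = tail n * (2 * (M * norm w) + 3/2)" by (simp add: algebra_simps)
  also have "\<dots> \<le> tail n * 2" using M_w_small kappa_le_tail[of n] kappa_nonneg[of n]
    by (intro mult_left_mono) auto
  finally have "norm (fst (step x) n) \<le> M * (tail n * 2)"
    unfolding step_def fst_conv by (rule order_trans[OF norm_divide_lam_le mult_left_mono]) (use M_ge_1 in auto)
  then show "norm (fst (step x) n) \<le> 2 * M * tail n" by (simp add: algebra_simps)
  have "norm (snd (step x) n - 1) = norm w * norm (infsum (coupling x) {n..})"
    by (simp add: step_def norm_mult)
  also have "\<dots> \<le> norm w * (4 * M^4)"
    by (rule mult_left_mono[OF norm_infsum_coupling_le[OF assms] norm_ge_zero])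
  also have "\<dots> \<le> 1/2" using w_M4_small by simp
  finally show "norm (snd (step x) n - 1) \<le> 1/2" .
qed

lemma step_contracts:
  assumes "admissible x" "admissible y"
    and "\<And>m. norm (fst x m - fst y m) \<le> 4 * M^2 * \<eta>" "\<And>m. norm (snd x m - snd y m) \<le> \<eta>"
  shows "norm (fst (step x) n - fst (step y) n) \<le> 4 * M^2 * (\<eta> / 2)"
    and "norm (snd (step x) n - snd (step y) n) \<le> \<eta> / 2"
proof -
  have \<eta>: "0 \<le> \<eta>" using order_trans[OF norm_ge_zero assms(4)] .
  have "fst (step x) n - fst (step y) n
      = (w * (fst x (n+1) - fst y (n+1)) + a n * (snd x (n+1) - snd y (n+1))) / lam n"
    by (simp add: step_def diff_divide_distrib algebra_simps)
  also have "norm \<dots> \<le> M * (norm w * (4 * M^2 * \<eta>) + M * \<eta>)"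
  proof (rule order_trans[OF norm_divide_lam_le mult_left_mono])
    have "norm (a n) \<le> M" using a_le[of n] infsum_kappa_le_M[of "{n}"] by simp
    then show "norm (w * (fst x (n+1) - fst y (n+1)) + a n * (snd x (n+1) - snd y (n+1)))
        \<le> norm w * (4 * M^2 * \<eta>) + M * \<eta>"
      using norm_triangle_ineq[of "w * (fst x (n+1) - fst y (n+1))" "a n * (snd x (n+1) - snd y (n+1))"]
        mult_left_mono[OF assms(3)[of "n+1"] norm_ge_zero[of w]] mult_mono[OF _ assms(4)[of "n+1"]]
      by (smt (verit) norm_ge_zero norm_mult)
  qed (use M_ge_1 in auto)
  also have "\<dots> = M^2 * \<eta> * (4 * (M * norm w) + 1)" by (simp add: power2_eq_square algebra_simps)
  also have "\<dots> \<le> M^2 * \<eta> * 2" using M_w_small \<eta> by (intro mult_left_mono) auto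
  finally show "norm (fst (step x) n - fst (step y) n) \<le> 4 * M^2 * (\<eta> / 2)" by linarith
  have "snd (step x) n - snd (step y) n = w * (infsum (coupling x) {n..} - infsum (coupling y) {n..})"
    by (simp add: step_def algebra_simps)
  also have "norm \<dots> \<le> norm w * (M^2 * (\<eta> + 4 * M^2 * \<eta>))"
    unfolding norm_mult by (intro mult_left_mono norm_infsum_coupling_diff_le assms) auto
  also have "\<dots> = norm w * (M^2 * \<eta> + 4 * (M^4 * \<eta>))"
    by (simp add: algebra_simps power_add[symmetric])
  also have "\<dots> \<le> norm w * (5 * M^4 * \<eta>)"
  proof (rule mult_left_mono)
    show "M^2 * \<eta> + 4 * (M^4 * \<eta>) \<le> 5 * M^4 * \<eta>"
      using mult_right_mono[OF M_power_mono[of 2 4] \<eta>] by linarith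
  qed simp
  also have "\<dots> \<le> \<eta> / 2" using w_M4_small \<eta> mult_right_mono[OF w_M4_small \<eta>] by (simp add: algebra_simps)
  finally show "norm (snd (step x) n - snd (step y) n) \<le> \<eta> / 2" .
qed

definition iter :: "nat \<Rightarrow> (int \<Rightarrow> complex) \<times> (int \<Rightarrow> complex)" where
  "iter j = (step ^^ j) (\<lambda>_. 0, \<lambda>_. 1)"

lemma iter_Suc: "iter (Suc j) = step (iter j)"
  by (simp add: iter_def)

lemma iter_admissible: "admissible (iter j)"
proof (induction j)
  case 0
  show ?case using M_ge_1 infsum_kappa_nonneg by (simp add: iter_def admissible_def tail_def)
qed (simp add: iter_Suc step_admissible)

lemma iter_Suc_diff_le:
  "norm (fst (iter (Suc j)) n - fst (iter j) n) \<le> 4 * M^2 / 2^j \<and>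
   norm (snd (iter (Suc j)) n - snd (iter j) n) \<le> 1 / 2^j"
proof (induction j arbitrary: n)
  case 0
  have "fst (iter 0) n = 0" "snd (iter 0) n = 1" by (simp_all add: iter_def)
  moreover have "norm (fst (iter 1) n) \<le> 4 * M^2"
    using admissible_le(1)[OF iter_admissible, of 1 n] zero_le_power2[of M] by linarith
  moreover have "norm (snd (iter 1) n - 1) \<le> 1/2"
    using iter_admissible[of 1] unfolding admissible_def by blast
  ultimately show ?case by simp
next
  case (Suc j)
  show ?case
    using step_contracts[OF iter_admissible iter_admissible, of "Suc j" j "1 / 2^j" n] Suc.IH
    by (simp add: iter_Suc[symmetric] mult.commute)
qed

definition sol :: "(int \<Rightarrow> complex) \<times> (int \<Rightarrow> complex)" where
  "sol = ((\<lambda>n. lim (\<lambda>j. fst (iter j) n)), (\<lambda>n. lim (\<lambda>j. snd (iter j) n)))"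

lemma iter_tendsto_sol:
  shows "(\<lambda>j. fst (iter j) n) \<longlonglongrightarrow> fst sol n" "norm (fst (iter j) n - fst sol n) \<le> 8 * M^2 / 2^j"
    and "(\<lambda>j. snd (iter j) n) \<longlonglongrightarrow> snd sol n" "norm (snd (iter j) n - snd sol n) \<le> 2 / 2^j"
  using geometric_Cauchy[of "\<lambda>j. fst (iter j) n" "4 * M^2"]
    geometric_Cauchy[of "\<lambda>j. snd (iter j) n" 1] iter_Suc_diff_le
  by (auto simp: sol_def)

lemma sol_admissible: "admissible sol"
  unfolding admissible_def
proof (intro allI conjI)
  fix n
  show "norm (fst sol n) \<le> 2 * M * tail n"
    by (rule LIMSEQ_le_const2[OF tendsto_norm[OF iter_tendsto_sol(1)]])
      (use iter_admissible in \<open>auto simp: admissible_def\<close>)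
  show "norm (snd sol n - 1) \<le> 1/2"
    by (rule LIMSEQ_le_const2[OF tendsto_norm[OF tendsto_diff[OF iter_tendsto_sol(3) tendsto_const]]])
      (use iter_admissible in \<open>auto simp: admissible_def\<close>)
qed

lemma step_sol: "step sol = sol"
proof -
  have "(\<lambda>j. fst (iter (Suc j)) n) \<longlonglongrightarrow> fst (step sol) n" for n
    unfolding iter_Suc step_def fst_conv by (intro tendsto_intros iter_tendsto_sol lam_nonzero)
  then have fst_eq: "fst (step sol) n = fst sol n" for n
    using LIMSEQ_unique LIMSEQ_Suc[OF iter_tendsto_sol(1)] by blast
  have "(\<lambda>j. snd (iter (Suc j)) n) \<longlonglongrightarrow> snd (step sol) n" for n
  proof -
    have bound: "norm (infsum (coupling (iter j)) {n..} - infsum (coupling sol) {n..})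
        \<le> M^2 * (2 + 8 * M^2) / 2^j" for j
      using norm_infsum_coupling_diff_le[OF iter_admissible sol_admissible iter_tendsto_sol(2,4)]
      by (simp add: field_simps)
    have "(\<lambda>j. M^2 * (2 + 8 * M^2) / 2^j) \<longlonglongrightarrow> 0"
      by (rule LIMSEQ_divide_realpow_zero) simp
    then have "(\<lambda>j. infsum (coupling (iter j)) {n..} - infsum (coupling sol) {n..}) \<longlonglongrightarrow> 0"
      by (rule Lim_null_comparison[OF always_eventually[OF allI[OF bound]]])
    then show ?thesis
      unfolding iter_Suc step_def snd_conv by (intro tendsto_intros) (simp add: LIM_zero_iff)
  qed
  then have snd_eq: "snd (step sol) n = snd sol n" for n
    using LIMSEQ_unique LIMSEQ_Suc[OF iter_tendsto_sol(3)] by blast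
  show ?thesis using fst_eq snd_eq by (simp add: prod_eq_iff fun_eq_iff)
qed


lemma sol_fst_eq: "fst sol n = (w * fst sol (n+1) + a n * snd sol (n+1)) / lam n"
  by (subst (1) step_sol[symmetric]) (simp add: step_def)

lemma sol_snd_eq: "snd sol n = 1 + w * infsum (coupling sol) {n..}"
  by (subst (1) step_sol[symmetric]) (simp add: step_def)

lemma sol_snd_step: "snd sol n = snd sol (n+1) + w * coupling sol n"
  using sol_snd_eq[of n] sol_snd_eq[of "n+1"]
    infsum_int_atLeast_split[OF coupling_summable[OF sol_admissible], of n]
  by (simp add: algebra_simps)

lemma sol_fst_tendsto: "(fst sol \<longlongrightarrow> 0) at_top"
proof (rule Lim_null_comparison)
  show "\<forall>\<^sub>F n in at_top. norm (fst sol n) \<le> 2 * M * tail n"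
    using sol_admissible by (simp add: admissible_def)
  show "((\<lambda>n. 2 * M * tail n) \<longlongrightarrow> 0) at_top"
    using tendsto_mult_right_zero[OF tail_tendsto_0] .
qed

lemma sol_snd_tendsto:
  shows "(snd sol \<longlongrightarrow> 1) at_top"
    and "(snd sol \<longlongrightarrow> 1 + w * infsum (coupling sol) UNIV) at_bot"
proof -
  have "(\<lambda>k. norm (coupling sol k)) summable_on UNIV"
    by (rule summable_on_comparison_test[OF summable_on_cmult_right[OF kappa_summable]])
      (use coupling_le[OF sol_admissible] in auto)
  note tails = infsum_int_atLeast_tendsto[OF this]
  have "snd sol = (\<lambda>n. 1 + w * infsum (coupling sol) {n..})"
    using sol_snd_eq by auto
  then show "(snd sol \<longlongrightarrow> 1) at_top" "(snd sol \<longlongrightarrow> 1 + w * infsum (coupling sol) UNIV) at_bot"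
    using tendsto_add[OF tendsto_const tendsto_mult[OF tendsto_const tails(1)], of 1 w]
      tendsto_add[OF tendsto_const tendsto_mult[OF tendsto_const tails(2)], of 1 w]
    by simp_all
qed

lemma sol_snd_minus_1_le: "norm (snd sol n - 1) \<le> 4 * M^4 * norm w"
proof -
  have "norm (snd sol n - 1) = norm w * norm (infsum (coupling sol) {n..})"
    by (simp add: sol_snd_eq[of n] norm_mult)
  also have "\<dots> \<le> norm w * (4 * M^4)"
    by (rule mult_left_mono[OF norm_infsum_coupling_le[OF sol_admissible] norm_ge_zero])
  finally show ?thesis by (simp add: mult.commute)
qed

lemma kappa_le_M: "\<kappa> n \<le> M"
  using infsum_kappa_le_M[of "{n}"] by simp

lemma sol_fst_minus_leading_le:
  assumes a0: "\<And>n. norm (a n - a0 n) \<le> norm w * \<kappa> n"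
  shows "norm (fst sol m - a0 m / lam m) \<le> 7 * M^6 * norm w"
proof -
  let ?t = "fst sol" and ?u = "snd sol"
  note t_le = admissible_le(1)[OF sol_admissible]
  have "?t m - a0 m / lam m = (w * ?t (m+1) + a m * (?u (m+1) - 1) + (a m - a0 m)) / lam m"
    by (subst sol_fst_eq) (simp add: diff_divide_distrib algebra_simps)
  also have "norm \<dots> \<le> M * (norm w * (2 * M^2) + M * (4 * M^4 * norm w) + norm w * M)"
  proof (rule order_trans[OF norm_divide_lam_le mult_left_mono])
    have "norm (a m * (?u (m+1) - 1)) \<le> M * (4 * M^4 * norm w)"
      unfolding norm_mult
      by (rule mult_mono[OF order_trans[OF a_le kappa_le_M] sol_snd_minus_1_le]) (use M_ge_1 in auto)
    moreover have "norm (w * ?t (m+1)) \<le> norm w * (2 * M^2)"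
      unfolding norm_mult by (rule mult_left_mono[OF t_le norm_ge_zero])
    moreover have "norm (a m - a0 m) \<le> norm w * M"
      using a0[of m] mult_left_mono[OF kappa_le_M[of m] norm_ge_zero[of w]] by linarith
    ultimately show "norm (w * ?t (m+1) + a m * (?u (m+1) - 1) + (a m - a0 m))
        \<le> norm w * (2 * M^2) + M * (4 * M^4 * norm w) + norm w * M"
      using norm_triangle_ineq[of "w * ?t (m+1) + a m * (?u (m+1) - 1)" "a m - a0 m"]
        norm_triangle_ineq[of "w * ?t (m+1)" "a m * (?u (m+1) - 1)"] by linarith
  qed (use M_ge_1 in auto)
  also have "\<dots> = (2 * M^3 + 4 * M^6 + M^2) * norm w"
    by (simp add: eval_nat_numeral algebra_simps)
  also have "\<dots> \<le> 7 * M^6 * norm w"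
    using M_power_mono[of 3 6] M_power_mono[of 2 6] by (intro mult_right_mono) auto
  finally show ?thesis .
qed

lemma coupling_sol_minus_leading_le:
  assumes a0: "\<And>n. norm (a n - a0 n) \<le> norm w * \<kappa> n"
      and b0: "\<And>n. norm (b n - b0 n) \<le> norm w * \<kappa> n"
      and c0: "\<And>n. norm (c n - c0 n) \<le> norm w * \<kappa> n"
      and b0_le: "\<And>n. norm (b0 n) \<le> \<kappa> n"
  shows "norm (coupling sol k - (c0 k + b0 k * (a0 (k+1) / lam (k+1))) / lam k)
    \<le> 14 * M^7 * norm w * \<kappa> k"
proof -
  let ?t = "fst sol" and ?u = "snd sol" and ?X = "\<lambda>k. (c0 k + b0 k * (a0 (k+1) / lam (k+1))) / lam k"
  note t_le = admissible_le(1)[OF sol_admissible] and t_a0 = sol_fst_minus_leading_le[OF a0]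
  have "coupling sol k - ?X k = (c k * (?u (k+1) - 1) + (c k - c0 k) + (b k - b0 k) * ?t (k+1)
      + b0 k * (?t (k+1) - a0 (k+1) / lam (k+1))) / lam k"
    by (simp add: coupling_def diff_divide_distrib algebra_simps)
  also have "norm \<dots> \<le> M * (\<kappa> k * (4 * M^4 * norm w) + norm w * \<kappa> k + norm w * \<kappa> k * (2 * M^2)
      + \<kappa> k * (7 * M^6 * norm w))"
  proof (rule order_trans[OF norm_divide_lam_le mult_left_mono])
    have "norm (c k * (?u (k+1) - 1)) \<le> \<kappa> k * (4 * M^4 * norm w)"
      unfolding norm_mult by (rule mult_mono[OF c_le sol_snd_minus_1_le kappa_nonneg norm_ge_zero])
    moreover have "norm ((b k - b0 k) * ?t (k+1)) \<le> norm w * \<kappa> k * (2 * M^2)"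
      unfolding norm_mult by (rule mult_mono[OF b0 t_le]) (use kappa_nonneg in auto)
    moreover have "norm (b0 k * (?t (k+1) - a0 (k+1) / lam (k+1))) \<le> \<kappa> k * (7 * M^6 * norm w)"
      unfolding norm_mult by (rule mult_mono[OF b0_le t_a0 kappa_nonneg norm_ge_zero])
    ultimately show "norm (c k * (?u (k+1) - 1) + (c k - c0 k) + (b k - b0 k) * ?t (k+1)
        + b0 k * (?t (k+1) - a0 (k+1) / lam (k+1)))
        \<le> \<kappa> k * (4 * M^4 * norm w) + norm w * \<kappa> k + norm w * \<kappa> k * (2 * M^2)
          + \<kappa> k * (7 * M^6 * norm w)"
      using c0[of k] norm_triangle_ineq[of "c k * (?u (k+1) - 1) + (c k - c0 k) + (b k - b0 k) * ?t (k+1)"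
          "b0 k * (?t (k+1) - a0 (k+1) / lam (k+1))"]
        norm_triangle_ineq[of "c k * (?u (k+1) - 1) + (c k - c0 k)" "(b k - b0 k) * ?t (k+1)"]
        norm_triangle_ineq[of "c k * (?u (k+1) - 1)" "c k - c0 k"]
      by linarith
  qed (use M_ge_1 in auto)
  also have "\<dots> = (4 * M^5 + M + 2 * M^3 + 7 * M^7) * (norm w * \<kappa> k)"
    by (simp add: eval_nat_numeral algebra_simps)
  also have "\<dots> \<le> 14 * M^7 * (norm w * \<kappa> k)"
    using M_power_mono[of 5 7] M_power_mono[of 1 7] M_power_mono[of 3 7] kappa_nonneg[of k]
    by (intro mult_right_mono) auto
  finally show ?thesis by (simp add: mult.assoc)
qed

lemma sol_coupling_expansion:
  fixes a0 b0 c0 :: "int \<Rightarrow> complex"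
  assumes a0: "\<And>n. norm (a n - a0 n) \<le> norm w * \<kappa> n"
      and b0: "\<And>n. norm (b n - b0 n) \<le> norm w * \<kappa> n"
      and c0: "\<And>n. norm (c n - c0 n) \<le> norm w * \<kappa> n"
      and a0_le: "\<And>n. norm (a0 n) \<le> \<kappa> n" and b0_le: "\<And>n. norm (b0 n) \<le> \<kappa> n"
      and c0_le: "\<And>n. norm (c0 n) \<le> \<kappa> n"
  defines "X \<equiv> \<lambda>k. (c0 k + b0 k * (a0 (k+1) / lam (k+1))) / lam k"
  shows "norm (infsum (coupling sol) UNIV - infsum X UNIV) \<le> 14 * M^8 * norm w"
proof -
  have coupling_X: "norm (coupling sol k - X k) \<le> 14 * M^7 * norm w * \<kappa> k" for k
    unfolding X_def by (rule coupling_sol_minus_leading_le[OF a0 b0 c0 b0_le])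
  have "X summable_on UNIV" unfolding X_def
    by (rule leading_term_summable[OF kappa_nonneg kappa_summable delta_pos lam_ge a0_le b0_le c0_le])
  then have "infsum (coupling sol) UNIV - infsum X UNIV = infsum (\<lambda>k. coupling sol k - X k) UNIV"
    using infsum_diff[OF coupling_summable[OF sol_admissible]] by simp
  also have "norm \<dots> \<le> infsum (\<lambda>k. 14 * M^7 * norm w * \<kappa> k) UNIV"
    by (rule norm_infsum_dominated[OF summable_on_cmult_right[OF kappa_summable]]) (rule coupling_X)
  also have "\<dots> = 14 * M^7 * norm w * infsum \<kappa> UNIV" by (rule infsum_cmult_right')
  also have "\<dots> \<le> 14 * M^7 * norm w * M"
    using M_ge_1 by (intro mult_left_mono infsum_kappa_le_M mult_nonneg_nonneg) auto
  also have "\<dots> = 14 * M^8 * norm w" by (simp add: eval_nat_numeral)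
  finally show ?thesis .
qed

lemma normal_form_solution:
  fixes a0 b0 c0 :: "int \<Rightarrow> complex"
  assumes "\<And>n. norm (a n - a0 n) \<le> norm w * \<kappa> n" "\<And>n. norm (b n - b0 n) \<le> norm w * \<kappa> n"
      and "\<And>n. norm (c n - c0 n) \<le> norm w * \<kappa> n"
      and "\<And>n. norm (a0 n) \<le> \<kappa> n" "\<And>n. norm (b0 n) \<le> \<kappa> n" "\<And>n. norm (c0 n) \<le> \<kappa> n"
  shows "\<exists>t u L.
      (\<forall>n. lam n * t n = w * t (n+1) + a n * u (n+1)) \<and>
      (\<forall>n. lam n * (u n - u (n+1)) = w * (c n * u (n+1) + b n * t (n+1))) \<and>
      (t \<longlongrightarrow> 0) at_top \<and> (u \<longlongrightarrow> 1) at_top \<and> (u \<longlongrightarrow> L) at_bot \<and>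
      norm (L - 1 - w * (\<Sum>\<^sub>\<infinity>k. (c0 k + b0 k * (a0 (k+1) / lam (k+1))) / lam k))
        \<le> 14 * M^8 * norm w ^ 2"
proof (intro exI conjI allI)
  show "lam n * fst sol n = w * fst sol (n+1) + a n * snd sol (n+1)" for n
    by (subst sol_fst_eq[of n]) (simp add: lam_nonzero)
  show "lam n * (snd sol n - snd sol (n+1)) = w * (c n * snd sol (n+1) + b n * fst sol (n+1))" for n
    by (subst sol_snd_step[of n]) (simp add: coupling_def lam_nonzero)
  show "(fst sol \<longlongrightarrow> 0) at_top" "(snd sol \<longlongrightarrow> 1) at_top"
    "(snd sol \<longlongrightarrow> 1 + w * infsum (coupling sol) UNIV) at_bot"
    by (rule sol_fst_tendsto sol_snd_tendsto)+
  have "norm (1 + w * infsum (coupling sol) UNIV - 1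
      - w * (\<Sum>\<^sub>\<infinity>k. (c0 k + b0 k * (a0 (k+1) / lam (k+1))) / lam k))
      = norm w * norm (infsum (coupling sol) UNIV
        - (\<Sum>\<^sub>\<infinity>k. (c0 k + b0 k * (a0 (k+1) / lam (k+1))) / lam k))"
    by (simp add: norm_mult[symmetric] right_diff_distrib)
  also have "\<dots> \<le> norm w * (14 * M^8 * norm w)"
    by (intro mult_left_mono sol_coupling_expansion assms) simp
  finally show "norm (1 + w * infsum (coupling sol) UNIV - 1
      - w * (\<Sum>\<^sub>\<infinity>k. (c0 k + b0 k * (a0 (k+1) / lam (k+1))) / lam k)) \<le> 14 * M^8 * norm w ^ 2"
    by (simp add: power2_eq_square mult_ac)
qed

end

lemma normal_form_expansion:
  fixes lam :: "int \<Rightarrow> complex" and a b c :: "complex \<Rightarrow> int \<Rightarrow> complex" and \<kappa> :: "int \<Rightarrow> real"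
  assumes kappa_nonneg: "\<And>n. 0 \<le> \<kappa> n" and kappa_summable: "\<kappa> summable_on UNIV"
    and lam_nonzero: "\<And>n. lam n \<noteq> 0" and lam_summable: "(\<lambda>n. norm (lam n - 1)) summable_on UNIV"
    and a_le: "\<And>w n. norm w \<le> 1 \<Longrightarrow> norm (a w n) \<le> \<kappa> n"
    and b_le: "\<And>w n. norm w \<le> 1 \<Longrightarrow> norm (b w n) \<le> \<kappa> n"
    and c_le: "\<And>w n. norm w \<le> 1 \<Longrightarrow> norm (c w n) \<le> \<kappa> n"
    and a_lipschitz: "\<And>w n. norm w \<le> 1 \<Longrightarrow> norm (a w n - a 0 n) \<le> norm w * \<kappa> n"
    and b_lipschitz: "\<And>w n. norm w \<le> 1 \<Longrightarrow> norm (b w n - b 0 n) \<le> norm w * \<kappa> n"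
    and c_lipschitz: "\<And>w n. norm w \<le> 1 \<Longrightarrow> norm (c w n - c 0 n) \<le> norm w * \<kappa> n"
  obtains \<rho> K where "0 < \<rho>" "\<rho> \<le> 1"
    "\<And>w. norm w \<le> \<rho> \<Longrightarrow> \<exists>t u L.
      (\<forall>n. lam n * t n = w * t (n+1) + a w n * u (n+1)) \<and>
      (\<forall>n. lam n * (u n - u (n+1)) = w * (c w n * u (n+1) + b w n * t (n+1))) \<and>
      (t \<longlongrightarrow> 0) at_top \<and> (u \<longlongrightarrow> 1) at_top \<and> (u \<longlongrightarrow> L) at_bot \<and>
      norm (L - 1 - w * (\<Sum>\<^sub>\<infinity>k. (c 0 k + b 0 k * (a 0 (k+1) / lam (k+1))) / lam k))
        \<le> K * norm w ^ 2"
proof -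
  obtain \<delta>0 where \<delta>0: "0 < \<delta>0" "\<And>n. \<delta>0 \<le> norm (lam n)"
    using bounded_away_from_0_int[OF lam_nonzero lam_summable] by auto
  define \<delta> where "\<delta> = min \<delta>0 1"
  define M where "M = (1 + infsum \<kappa> UNIV) / \<delta>"
  have \<delta>: "0 < \<delta>" "\<delta> \<le> 1" "\<And>n. \<delta> \<le> norm (lam n)"
    using \<delta>0 by (auto simp: \<delta>_def min.coboundedI1)
  have "0 < M"
    using \<delta> infsum_nonneg[of UNIV \<kappa>] kappa_nonneg by (simp add: M_def add_pos_nonneg)
  define \<rho> where "\<rho> = min 1 (1 / (10 * M^4))"
  show thesis
  proof (rule that[of \<rho> "14 * M^8"])
    show "0 < \<rho>" "\<rho> \<le> 1" using \<open>0 < M\<close> by (simp_all add: \<rho>_def)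
    fix w :: complex
    assume "norm w \<le> \<rho>"
    then have w: "norm w \<le> 1" "norm w * M^4 \<le> 1/10"
      using \<open>0 < M\<close> by (auto simp: \<rho>_def field_simps)
    interpret S: normal_form_system w lam "a w" "b w" "c w" \<kappa> \<delta>
      using kappa_nonneg kappa_summable \<delta> a_le[OF w(1)] b_le[OF w(1)] c_le[OF w(1)] w(2)
      by unfold_locales (simp_all add: M_def)
    have "norm (0::complex) \<le> 1" by simp
    from S.normal_form_solution[OF a_lipschitz[OF w(1)] b_lipschitz[OF w(1)] c_lipschitz[OF w(1)]
        a_le[OF this] b_le[OF this] c_le[OF this]]
    show "\<exists>t u L.
      (\<forall>n. lam n * t n = w * t (n+1) + a w n * u (n+1)) \<and>
      (\<forall>n. lam n * (u n - u (n+1)) = w * (c w n * u (n+1) + b w n * t (n+1))) \<and>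
      (t \<longlongrightarrow> 0) at_top \<and> (u \<longlongrightarrow> 1) at_top \<and> (u \<longlongrightarrow> L) at_bot \<and>
      norm (L - 1 - w * (\<Sum>\<^sub>\<infinity>k. (c 0 k + b 0 k * (a 0 (k+1) / lam (k+1))) / lam k))
        \<le> 14 * M^8 * norm w ^ 2"
      by (simp add: S.M_def M_def)
  qed
qed

definition wronskian ::
    "(int \<Rightarrow> complex) \<times> (int \<Rightarrow> complex) \<Rightarrow> (int \<Rightarrow> complex) \<times> (int \<Rightarrow> complex) \<Rightarrow> int \<Rightarrow> complex"
  where "wronskian x y n = fst x n * snd y n - snd x n * fst y n"

lemma AL_solD:
  assumes "AL_sol q r z x"
  shows "fst x n = z * fst x (n+1) + (z - inverse z) * q n * snd x (n+1)"
    and "snd x n = z * r n * fst x (n+1) + (inverse z + (z - inverse z) * q n * r n) * snd x (n+1)"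
  using assms unfolding AL_sol_def by blast+

text \<open>The transfer matrix has determinant \<open>1\<close>; this is the recursion for its inverse.\<close>

lemma AL_sol_Suc:
  assumes "z \<noteq> 0" "AL_sol q r z x"
  shows "fst x (n+1) = (inverse z + (z - inverse z) * q n * r n) * fst x n - (z - inverse z) * q n * snd x n"
    and "snd x (n+1) = z * snd x n - z * r n * fst x n"
  using assms(1) unfolding AL_solD[OF assms(2), of n] by (simp_all add: field_simps)

lemma AL_sol_wronskian_Suc:
  assumes "z \<noteq> 0" "AL_sol q r z x" "AL_sol q r z y"
  shows "wronskian x y (n+1) = wronskian x y n"
  using assms(1) unfolding wronskian_def AL_solD[OF assms(2), of n] AL_solD[OF assms(3), of n]
  by (simp add: field_simps)

lemma AL_sol_wronskian_const:
  assumes "z \<noteq> 0" "AL_sol q r z x" "AL_sol q r z y"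
  shows "wronskian x y n = wronskian x y 0"
proof (induction n rule: int_induct[where k = 0])
  case (step1 i) then show ?case using AL_sol_wronskian_Suc[OF assms, of i] by simp
next
  case (step2 i) then show ?case using AL_sol_wronskian_Suc[OF assms, of "i - 1"] by simp
qed simp

lemma AL_sol_eqI:
  assumes "z \<noteq> 0" "AL_sol q r z x" "AL_sol q r z y" "fst x N = fst y N" "snd x N = snd y N"
  shows "x = y"
proof -
  have up: "fst x n = fst y n \<and> snd x n = snd y n" if "N \<le> n" for n
    using that
  proof (induction n rule: int_ge_induct)
    case (step i)
    then show ?case using AL_sol_Suc[OF assms(1,2), of i] AL_sol_Suc[OF assms(1,3), of i] by simp
  qed (use assms(4,5) in simp)
  have down: "fst x n = fst y n \<and> snd x n = snd y n" if "n \<le> N" for n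
    using that
  proof (induction n rule: int_le_induct)
    case (step i)
    then show ?case using AL_solD[OF assms(2), of "i - 1"] AL_solD[OF assms(3), of "i - 1"] by simp
  qed (use assms(4,5) in simp)
  show ?thesis
    using up down by (simp add: prod_eq_iff fun_eq_iff) (meson linear)
qed

lemma AL_sol_scale:
  assumes "AL_sol q r z x"
  shows "AL_sol q r z (\<lambda>n. k * fst x n, \<lambda>n. k * snd x n)"
  unfolding AL_sol_def fst_conv snd_conv
proof (intro allI conjI)
  fix n
  show "k * fst x n = z * (k * fst x (n+1)) + (z - inverse z) * q n * (k * snd x (n+1))"
    by (subst AL_solD(1)[OF assms, of n]) (simp add: algebra_simps)
  show "k * snd x n = z * r n * (k * fst x (n+1)) + (inverse z + (z - inverse z) * q n * r n) * (k * snd x (n+1))"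
    by (subst AL_solD(2)[OF assms, of n]) (simp add: algebra_simps)
qed

lemma proportional_if_det_eq_0:
  fixes a1 a2 b1 b2 :: "'a::field"
  assumes "a1 * b2 = a2 * b1" "a1 \<noteq> 0 \<or> a2 \<noteq> 0"
  shows "\<exists>k. b1 = k * a1 \<and> b2 = k * a2"
proof (cases "a1 = 0")
  case True
  then show ?thesis using assms by (intro exI[of _ "b2 / a2"]) auto
next
  case False
  then show ?thesis using assms(1) by (intro exI[of _ "b1 / a1"]) (auto simp: field_simps)
qed

lemma AL_sol_wronskian_eq_0:
  assumes "z \<noteq> 0" "AL_sol q r z x" "AL_sol q r z y" and s: "\<forall>\<^sub>F n in at_top. 1 \<le> norm (s n)"
    and x: "((\<lambda>n. s n * fst x n) \<longlongrightarrow> A1) at_top" "((\<lambda>n. s n * snd x n) \<longlongrightarrow> A2) at_top"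
    and y: "((\<lambda>n. s n * fst y n) \<longlongrightarrow> A1) at_top" "((\<lambda>n. s n * snd y n) \<longlongrightarrow> A2) at_top"
  shows "wronskian x y n = 0"
proof -
  let ?W = "wronskian x y 0"
  have "(s n * fst x n) * (s n * snd y n) - (s n * snd x n) * (s n * fst y n) = s n ^ 2 * ?W" for n
  proof -
    have "(s n * fst x n) * (s n * snd y n) - (s n * snd x n) * (s n * fst y n) = s n ^ 2 * wronskian x y n"
      by (simp add: wronskian_def power2_eq_square algebra_simps)
    then show ?thesis using AL_sol_wronskian_const[OF assms(1-3), of n] by simp
  qed
  moreover have "((\<lambda>n. (s n * fst x n) * (s n * snd y n) - (s n * snd x n) * (s n * fst y n))
      \<longlongrightarrow> A1 * A2 - A2 * A1) at_top"
    by (intro tendsto_intros x y)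
  ultimately have "((\<lambda>n. norm (s n ^ 2 * ?W)) \<longlongrightarrow> 0) at_top"
    using tendsto_norm_zero by fastforce
  moreover have "\<forall>\<^sub>F n in at_top. norm ?W \<le> norm (s n ^ 2 * ?W)"
    using s by eventually_elim (simp add: norm_mult norm_power mult_le_cancel_right1 one_le_power)
  ultimately have "norm ?W \<le> 0" by (rule tendsto_lowerbound) simp
  then show ?thesis using AL_sol_wronskian_const[OF assms(1-3), of n] by simp
qed

lemma AL_sol_unique_asymptotics:
  assumes z: "z \<noteq> 0" and sol: "AL_sol q r z x" "AL_sol q r z y"
    and s: "\<forall>\<^sub>F n in at_top. 1 \<le> norm (s n)"
    and x: "((\<lambda>n. s n * fst x n) \<longlongrightarrow> A1) at_top" "((\<lambda>n. s n * snd x n) \<longlongrightarrow> A2) at_top"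
    and y: "((\<lambda>n. s n * fst y n) \<longlongrightarrow> A1) at_top" "((\<lambda>n. s n * snd y n) \<longlongrightarrow> A2) at_top"
    and A: "A1 \<noteq> 0 \<or> A2 \<noteq> 0"
  shows "x = y"
proof -
  have "\<exists>N. fst x N \<noteq> 0 \<or> snd x N \<noteq> 0"
  proof (rule ccontr)
    assume "\<not> ?thesis"
    then have "(\<lambda>n. s n * fst x n) = (\<lambda>_. 0)" "(\<lambda>n. s n * snd x n) = (\<lambda>_. 0)" by auto
    then have "((\<lambda>_::int. 0) \<longlongrightarrow> A1) at_top" "((\<lambda>_::int. 0) \<longlongrightarrow> A2) at_top"
      using x by simp_all
    then have "A1 = 0" "A2 = 0" by (simp_all add: tendsto_const_iff)
    with A show False by simp
  qed
  then obtain N where N: "fst x N \<noteq> 0 \<or> snd x N \<noteq> 0" by blast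
  obtain k where k: "fst y N = k * fst x N" "snd y N = k * snd x N"
    using proportional_if_det_eq_0[OF _ N] AL_sol_wronskian_eq_0[OF z sol s x y, of N]
    by (auto simp: wronskian_def)
  have y_eq: "y = (\<lambda>n. k * fst x n, \<lambda>n. k * snd x n)"
    by (rule AL_sol_eqI[OF z sol(2) AL_sol_scale[OF sol(1)]]) (use k in simp_all)
  have ky: "((\<lambda>n. s n * fst y n) \<longlongrightarrow> k * A1) at_top" "((\<lambda>n. s n * snd y n) \<longlongrightarrow> k * A2) at_top"
    unfolding y_eq using tendsto_mult_left[OF x(1), of k] tendsto_mult_left[OF x(2), of k]
    by (simp_all add: ac_simps)
  have "k * A1 = A1" "k * A2 = A2"
    by (rule tendsto_unique[OF _ ky(1) y(1)], simp) (rule tendsto_unique[OF _ ky(2) y(2)], simp)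
  then have "k = 1" using A by auto
  then show ?thesis using y_eq by simp
qed

lemma AL_sol_gauge_small:
  assumes "z \<noteq> 0"
    and A: "\<And>n. A n = z\<^sup>2 * A (n+1) + (z\<^sup>2 - 1) * q n * B (n+1)"
    and B: "\<And>n. B n = z\<^sup>2 * r n * A (n+1) + (1 + (z\<^sup>2 - 1) * q n * r n) * B (n+1)"
  shows "AL_sol q r z (\<lambda>n. z powi n * A n, \<lambda>n. z powi n * B n)"
  unfolding AL_sol_def fst_conv snd_conv
proof (intro allI conjI)
  fix n :: int
  have p: "z powi (n+1) = z powi n * z" using assms(1) by (simp add: power_int_add_1)
  show "z powi n * A n = z * (z powi (n+1) * A (n+1)) + (z - inverse z) * q n * (z powi (n+1) * B (n+1))"
    unfolding p A[of n] using assms(1) by (simp add: field_simps power2_eq_square)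
  show "z powi n * B n = z * r n * (z powi (n+1) * A (n+1))
      + (inverse z + (z - inverse z) * q n * r n) * (z powi (n+1) * B (n+1))"
    unfolding p B[of n] using assms(1) by (simp add: field_simps power2_eq_square)
qed

lemma AL_sol_gauge_large:
  assumes "z \<noteq> 0"
    and A: "\<And>n. A n = A (n+1) + (1 - inverse (z\<^sup>2)) * q n * B (n+1)"
    and B: "\<And>n. B n = r n * A (n+1) + (inverse (z\<^sup>2) + (1 - inverse (z\<^sup>2)) * q n * r n) * B (n+1)"
  shows "AL_sol q r z (\<lambda>n. z powi (-n) * A n, \<lambda>n. z powi (-n) * B n)"
  unfolding AL_sol_def fst_conv snd_conv
proof (intro allI conjI)
  fix n :: int
  have p: "z powi (- (n+1)) = z powi (-n) * inverse z"
    using assms(1) power_int_add[of z "-n" "-1"] by (simp add: power_int_minus)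
  show "z powi (-n) * A n = z * (z powi (- (n+1)) * A (n+1)) + (z - inverse z) * q n * (z powi (- (n+1)) * B (n+1))"
    unfolding p A[of n] using assms(1) by (simp add: field_simps power2_eq_square)
  show "z powi (-n) * B n = z * r n * (z powi (- (n+1)) * A (n+1))
      + (inverse z + (z - inverse z) * q n * r n) * (z powi (- (n+1)) * B (n+1))"
    unfolding p B[of n] using assms(1) by (simp add: field_simps power2_eq_square)
qed

lemma norm_power_int_ge_1:
  fixes z :: complex
  assumes "1 \<le> norm z" "0 \<le> n"
  shows "1 \<le> norm (z powi n)"
proof -
  obtain m where "n = int m" using assms(2) nonneg_int_cases by blast
  then show ?thesis using assms(1) by (simp add: norm_power one_le_power)
qed

lemma jost_psi_eqI:
  assumes z: "z \<noteq> 0" "norm z \<le> 1" and sol: "AL_sol q r z \<psi>"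
    and lim: "((\<lambda>n. z powi (-n) * fst \<psi> n) \<longlongrightarrow> 0) at_top" "((\<lambda>n. z powi (-n) * snd \<psi> n) \<longlongrightarrow> 1) at_top"
  shows "jost_psi q r z = \<psi>"
  unfolding jost_psi_def
proof (rule the_equality)
  have "1 \<le> norm (inverse z)" using z by (simp add: norm_inverse one_le_inverse_iff)
  have "\<forall>\<^sub>F n in at_top. 1 \<le> norm (z powi (-n))"
    using eventually_ge_at_top[of "0::int"]
  proof eventually_elim
    case (elim n)
    show ?case using norm_power_int_ge_1[OF \<open>1 \<le> norm (inverse z)\<close> elim]
      by (simp add: power_int_inverse power_int_minus)
  qed
  then show "ab = \<psi>" if "AL_sol q r z ab \<and> ((\<lambda>n. z powi (-n) * fst ab n) \<longlongrightarrow> 0) at_top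
      \<and> ((\<lambda>n. z powi (-n) * snd ab n) \<longlongrightarrow> 1) at_top" for ab
    using AL_sol_unique_asymptotics[OF z(1) sol _ _ lim, of ab] that by simp
qed (use sol lim in blast)

lemma jost_psibar_eqI:
  assumes z: "z \<noteq> 0" "1 \<le> norm z" and sol: "AL_sol q r z \<psi>"
    and lim: "((\<lambda>n. z powi n * fst \<psi> n) \<longlongrightarrow> 1) at_top" "((\<lambda>n. z powi n * snd \<psi> n) \<longlongrightarrow> 0) at_top"
  shows "jost_psibar q r z = \<psi>"
  unfolding jost_psibar_def
proof (rule the_equality)
  have "\<forall>\<^sub>F n in at_top. 1 \<le> norm (z powi n)"
    using eventually_ge_at_top[of "0::int"] by eventually_elim (rule norm_power_int_ge_1[OF z(2)])
  then show "ab = \<psi>" if "AL_sol q r z ab \<and> ((\<lambda>n. z powi n * fst ab n) \<longlongrightarrow> 1) at_top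
      \<and> ((\<lambda>n. z powi n * snd ab n) \<longlongrightarrow> 0) at_top" for ab
    using AL_sol_unique_asymptotics[OF z(1) sol _ _ lim, of ab] that by simp
qed (use sol lim in blast)

lemma transT_from_normal_form:
  fixes q r t u P :: "int \<Rightarrow> complex"
  assumes z: "z \<noteq> 0" "norm z \<le> 1"
    and P: "\<And>n. P n = (1 - q n * r n) * P (n+1)" "(P \<longlongrightarrow> 1) at_top" "(P \<longlongrightarrow> D) at_bot"
    and t: "\<And>n. (1 - q n * r n) * t n = z\<^sup>2 * t (n+1) + (z\<^sup>2 - 1) * q n * u (n+1)"
    and u: "\<And>n. (1 - q n * r n) * (u n - u (n+1)) = z\<^sup>2 * (q n * r n * u (n+1) + r n * t (n+1))"
    and lim: "(t \<longlongrightarrow> 0) at_top" "(u \<longlongrightarrow> 1) at_top" "(u \<longlongrightarrow> L) at_bot"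
  shows "transT q r z = 1 / (D * L)"
proof -
  define A where "A n = P n * t n" for n
  define B where "B n = P n * u n" for n
  have "A n = z\<^sup>2 * A (n+1) + (z\<^sup>2 - 1) * q n * B (n+1)" for n
    using P(1)[of n] t[of n] unfolding A_def B_def by algebra
  moreover have "B n = z\<^sup>2 * r n * A (n+1) + (1 + (z\<^sup>2 - 1) * q n * r n) * B (n+1)" for n
    using P(1)[of n] u[of n] unfolding A_def B_def by algebra
  ultimately have sol: "AL_sol q r z (\<lambda>n. z powi n * A n, \<lambda>n. z powi n * B n)"
    by (rule AL_sol_gauge_small[OF z(1)])
  have cancel: "z powi (-n) * (z powi n * X) = X" for n X
    using z(1) by (simp add: power_int_minus)
  have "(A \<longlongrightarrow> 1 * 0) at_top" "(B \<longlongrightarrow> 1 * 1) at_top" "(B \<longlongrightarrow> D * L) at_bot"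
    unfolding A_def[abs_def] B_def[abs_def] by (intro tendsto_mult P lim)+
  then have "jost_psi q r z = (\<lambda>n. z powi n * A n, \<lambda>n. z powi n * B n)" "(B \<longlongrightarrow> D * L) at_bot"
    by (auto intro!: jost_psi_eqI[OF z sol] simp: cancel)
  then show ?thesis
    unfolding transT_def by (simp add: cancel tendsto_Lim)
qed

lemma transTbar_from_normal_form:
  fixes q r t u P :: "int \<Rightarrow> complex"
  assumes z: "z \<noteq> 0" "1 \<le> norm z" and v: "v = inverse (z\<^sup>2)"
    and P: "\<And>n. P n = (1 + q n * r (n+1)) * P (n+1)" "(P \<longlongrightarrow> 1) at_top" "(P \<longlongrightarrow> E) at_bot"
    and r: "(r \<longlongrightarrow> 0) at_top"
    and t: "\<And>n. (1 + q n * r (n+1)) * t n = v * t (n+1) + r (n+1) * u (n+1)"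
    and u: "\<And>n. (1 + q n * r (n+1)) * (u n - u (n+1))
      = v * (- (q n * r (n+1)) * u (n+1) + (1 - v) * q n * t (n+1))"
    and lim: "(t \<longlongrightarrow> 0) at_top" "(u \<longlongrightarrow> 1) at_top" "(u \<longlongrightarrow> L) at_bot"
  shows "transTbar q r z = 1 / (E * L)"
proof -
  define A where "A n = P n * u n" for n
  define B where "B n = P n * (v * t n + r n * u n)" for n
  have A_eq: "A n = A (n+1) + (1 - v) * q n * B (n+1)" for n
    using P(1)[of n] u[of n] unfolding A_def B_def by algebra
  have "B n = r n * A (n+1) + (v + (1 - v) * q n * r n) * B (n+1)" for n
    using P(1)[of n] t[of n] A_eq[of n] unfolding A_def B_def by algebra
  with A_eq have sol: "AL_sol q r z (\<lambda>n. z powi (-n) * A n, \<lambda>n. z powi (-n) * B n)"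
    unfolding v by (rule AL_sol_gauge_large[OF z(1)])
  have cancel: "z powi n * (z powi (-n) * X) = X" for n X
    using z(1) by (simp add: power_int_minus)
  have "(A \<longlongrightarrow> 1 * 1) at_top" "(A \<longlongrightarrow> E * L) at_bot"
    unfolding A_def[abs_def] by (intro tendsto_mult P lim)+
  moreover have "(B \<longlongrightarrow> 1 * (v * 0 + 0 * 1)) at_top"
    unfolding B_def[abs_def] by (intro tendsto_intros P lim r)
  ultimately have "jost_psibar q r z = (\<lambda>n. z powi (-n) * A n, \<lambda>n. z powi (-n) * B n)"
      "(A \<longlongrightarrow> E * L) at_bot"
    by (auto intro!: jost_psibar_eqI[OF z sol] simp: cancel)
  then show ?thesis
    unfolding transTbar_def by (simp add: cancel tendsto_Lim)
qed

lemma transT_normal_form: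
  fixes q r :: "int \<Rightarrow> complex"
  assumes q: "(\<lambda>n. norm (q n)) summable_on UNIV" and r: "(\<lambda>n. norm (r n)) summable_on UNIV"
    and qr: "(\<lambda>n. norm (q n * r n)) summable_on UNIV" and nonzero: "\<And>n. 1 - q n * r n \<noteq> 0"
  obtains \<rho> K where "0 < \<rho>" "\<rho> \<le> 1" "\<And>w. norm w \<le> \<rho> \<Longrightarrow> \<exists>t u L.
      (\<forall>n. (1 - q n * r n) * t n = w * t (n+1) + (w - 1) * q n * u (n+1)) \<and>
      (\<forall>n. (1 - q n * r n) * (u n - u (n+1)) = w * (q n * r n * u (n+1) + r n * t (n+1))) \<and>
      (t \<longlongrightarrow> 0) at_top \<and> (u \<longlongrightarrow> 1) at_top \<and> (u \<longlongrightarrow> L) at_bot \<and>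
      norm (L - 1 - w * (\<Sum>\<^sub>\<infinity>k. (q k * r k + r k * ((0 - 1) * q (k+1) / (1 - q (k+1) * r (k+1))))
        / (1 - q k * r k))) \<le> K * norm w ^ 2"
proof -
  define \<kappa> where "\<kappa> n = 2 * norm (q n) + norm (r n) + norm (q n * r n)" for n
  have norms: "0 \<le> norm (q n)" "0 \<le> norm (r n)" "0 \<le> norm (q n * r n)" for n by simp_all
  show thesis
  proof (rule normal_form_expansion[of \<kappa> "\<lambda>n. 1 - q n * r n" "\<lambda>w n. (w - 1) * q n" "\<lambda>w n. r n"
        "\<lambda>w n. q n * r n"])
    show "0 \<le> \<kappa> n" "1 - q n * r n \<noteq> 0" "norm (r n) \<le> \<kappa> n" "norm (q n * r n) \<le> \<kappa> n"
      "norm (r n - r n) \<le> norm w * \<kappa> n" "norm (q n * r n - q n * r n) \<le> norm w * \<kappa> n" for w n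
      using norms[of n] nonzero[of n] by (simp_all add: \<kappa>_def)
    show "\<kappa> summable_on UNIV"
      unfolding \<kappa>_def by (intro summable_on_add summable_on_cmult_right q r qr)
    show "(\<lambda>n. norm (1 - q n * r n - 1)) summable_on UNIV" using qr by simp
    show "norm ((w - 1) * q n) \<le> \<kappa> n" if "norm w \<le> 1" for w n
    proof -
      have "norm (w - 1) \<le> 2" using that norm_triangle_ineq4[of w 1] by simp
      then have "norm ((w - 1) * q n) \<le> 2 * norm (q n)" unfolding norm_mult by (rule mult_right_mono) simp
      then show ?thesis unfolding \<kappa>_def using norms[of n] by linarith
    qed
    show "norm ((w - 1) * q n - (0 - 1) * q n) \<le> norm w * \<kappa> n" for w n
    proof -
      have "norm ((w - 1) * q n - (0 - 1) * q n) = norm w * norm (q n)" by (simp add: algebra_simps norm_mult)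
      also have "\<dots> \<le> norm w * \<kappa> n" using norms[of n] by (intro mult_left_mono) (simp_all add: \<kappa>_def)
      finally show ?thesis .
    qed
  qed (rule that)
qed

lemma transT_expansion:
  fixes q r :: "int \<Rightarrow> complex"
  assumes q: "(\<lambda>n. norm (q n)) summable_on UNIV" and r: "(\<lambda>n. norm (r n)) summable_on UNIV"
    and qr: "(\<lambda>n. norm (q n * r n)) summable_on UNIV" and nonzero: "\<And>n. 1 - q n * r n \<noteq> 0"
  defines "D \<equiv> int_prod (\<lambda>j. 1 - q j * r j)"
    and "S \<equiv> (\<Sum>\<^sub>\<infinity>k::int. r k * (q k - q (k+1) - q k * q (k+1) * r (k+1))
                 / ((1 - q k * r k) * (1 - q (k+1) * r (k+1))))"
  shows "\<exists>R. R \<in> O[at 0](\<lambda>z. z ^ 4) \<and> (\<forall>\<^sub>F z in at 0. transT q r z = (1 - z\<^sup>2 * S + R z) / D)"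
proof -
  have "(\<lambda>n. norm (1 - q n * r n - 1)) summable_on UNIV" using qr by simp
  then obtain P where P: "\<And>n. P n = (1 - q n * r n) * P (n+1)" "(P \<longlongrightarrow> 1) at_top" "(P \<longlongrightarrow> D) at_bot"
    and "D \<noteq> 0"
    using int_prod_tails[of "\<lambda>n. 1 - q n * r n", OF nonzero] unfolding D_def by blast
  obtain \<rho> K where "0 < \<rho>" "\<rho> \<le> 1" and sol: "\<And>w. norm w \<le> \<rho> \<Longrightarrow> \<exists>t u L.
      (\<forall>n. (1 - q n * r n) * t n = w * t (n+1) + (w - 1) * q n * u (n+1)) \<and>
      (\<forall>n. (1 - q n * r n) * (u n - u (n+1)) = w * (q n * r n * u (n+1) + r n * t (n+1))) \<and>
      (t \<longlongrightarrow> 0) at_top \<and> (u \<longlongrightarrow> 1) at_top \<and> (u \<longlongrightarrow> L) at_bot \<and>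
      norm (L - 1 - w * (\<Sum>\<^sub>\<infinity>k. (q k * r k + r k * ((0 - 1) * q (k+1) / (1 - q (k+1) * r (k+1))))
        / (1 - q k * r k))) \<le> K * norm w ^ 2"
    by (rule transT_normal_form[OF q r qr nonzero]) (rule that)
  have "(\<Sum>\<^sub>\<infinity>k. (q k * r k + r k * ((0 - 1) * q (k+1) / (1 - q (k+1) * r (k+1)))) / (1 - q k * r k)) = S"
    unfolding S_def using nonzero by (intro infsum_cong) (simp add: field_simps)
  note sol = sol[unfolded this]
  have z2: "((\<lambda>z::complex. z\<^sup>2) \<longlongrightarrow> 0) (at 0)" by (intro tendsto_eq_intros) auto
  have "\<forall>\<^sub>F z::complex in at 0. norm (z\<^sup>2) < \<rho>"
    by (rule order_tendstoD(2)[OF tendsto_norm_zero[OF z2] \<open>0 < \<rho>\<close>])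
  then have "\<forall>\<^sub>F z in at 0. \<exists>L. transT q r z = 1 / (D * L) \<and> norm (L - 1 - z\<^sup>2 * S) \<le> K * norm (z\<^sup>2) ^ 2"
    using eventually_neq_at_within[of 0 0 UNIV]
  proof eventually_elim
    case (elim z)
    then obtain t u L where tuL: "\<forall>n. (1 - q n * r n) * t n = z\<^sup>2 * t (n+1) + (z\<^sup>2 - 1) * q n * u (n+1)"
      "\<forall>n. (1 - q n * r n) * (u n - u (n+1)) = z\<^sup>2 * (q n * r n * u (n+1) + r n * t (n+1))"
      "(t \<longlongrightarrow> 0) at_top" "(u \<longlongrightarrow> 1) at_top" "(u \<longlongrightarrow> L) at_bot"
      "norm (L - 1 - z\<^sup>2 * S) \<le> K * norm (z\<^sup>2) ^ 2"
      using sol[of "z\<^sup>2"] by auto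
    have "norm z ^ 2 \<le> 1 ^ 2" using elim \<open>\<rho> \<le> 1\<close> by (simp add: norm_power)
    then have "norm z \<le> 1" by (rule power2_le_imp_le) simp
    then have "transT q r z = 1 / (D * L)"
      using elim tuL by (intro transT_from_normal_form[OF _ _ P]) auto
    then show ?case using tuL(6) by blast
  qed
  from reciprocal_expansion[OF z2 \<open>D \<noteq> 0\<close> this]
  show ?thesis by (simp add: power_mult[symmetric])
qed

lemma transTbar_normal_form:
  fixes q r :: "int \<Rightarrow> complex"
  assumes q: "(\<lambda>n. norm (q n)) summable_on UNIV" and r: "(\<lambda>n. norm (r n)) summable_on UNIV"
    and qr: "(\<lambda>n. norm (q n * r (n+1))) summable_on UNIV" and nonzero: "\<And>n. 1 + q n * r (n+1) \<noteq> 0"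
  obtains \<rho> K where "0 < \<rho>" "\<rho> \<le> 1" "\<And>w. norm w \<le> \<rho> \<Longrightarrow> \<exists>t u L.
      (\<forall>n. (1 + q n * r (n+1)) * t n = w * t (n+1) + r (n+1) * u (n+1)) \<and>
      (\<forall>n. (1 + q n * r (n+1)) * (u n - u (n+1))
        = w * (- (q n * r (n+1)) * u (n+1) + (1 - w) * q n * t (n+1))) \<and>
      (t \<longlongrightarrow> 0) at_top \<and> (u \<longlongrightarrow> 1) at_top \<and> (u \<longlongrightarrow> L) at_bot \<and>
      norm (L - 1 - w * (\<Sum>\<^sub>\<infinity>k. (- (q k * r (k+1)) + (1 - 0) * q k * (r (k+1+1) / (1 + q (k+1) * r (k+1+1))))
        / (1 + q k * r (k+1)))) \<le> K * norm w ^ 2"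
proof -
  define \<kappa> where "\<kappa> n = 2 * norm (q n) + norm (r (n+1)) + norm (q n * r (n+1))" for n
  have norms: "0 \<le> norm (q n)" "0 \<le> norm (r (n+1))" "0 \<le> norm (q n * r (n+1))" for n by simp_all
  show thesis
  proof (rule normal_form_expansion[of \<kappa> "\<lambda>n. 1 + q n * r (n+1)" "\<lambda>w n. r (n+1)" "\<lambda>w n. (1 - w) * q n"
        "\<lambda>w n. - (q n * r (n+1))"])
    show "0 \<le> \<kappa> n" "1 + q n * r (n+1) \<noteq> 0" "norm (r (n+1)) \<le> \<kappa> n"
      "norm (- (q n * r (n+1))) \<le> \<kappa> n" "norm (r (n+1) - r (n+1)) \<le> norm w * \<kappa> n"
      "norm (- (q n * r (n+1)) - - (q n * r (n+1))) \<le> norm w * \<kappa> n" for w n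
      using norms[of n] nonzero[of n] by (simp_all add: \<kappa>_def)
    show "\<kappa> summable_on UNIV"
      using r summable_on_int_shift_iff[of "\<lambda>n. norm (r n)" 1] unfolding \<kappa>_def
      by (intro summable_on_add summable_on_cmult_right q qr) simp_all
    show "(\<lambda>n. norm (1 + q n * r (n+1) - 1)) summable_on UNIV" using qr by simp
    show "norm ((1 - w) * q n) \<le> \<kappa> n" if "norm w \<le> 1" for w n
    proof -
      have "norm (1 - w) \<le> 2" using that norm_triangle_ineq4[of 1 w] by simp
      then have "norm ((1 - w) * q n) \<le> 2 * norm (q n)" unfolding norm_mult by (rule mult_right_mono) simp
      then show ?thesis unfolding \<kappa>_def using norms[of n] by linarith
    qed
    show "norm ((1 - w) * q n - (1 - 0) * q n) \<le> norm w * \<kappa> n" for w n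
    proof -
      have "norm ((1 - w) * q n - (1 - 0) * q n) = norm w * norm (q n)" by (simp add: algebra_simps norm_mult)
      also have "\<dots> \<le> norm w * \<kappa> n" using norms[of n] by (intro mult_left_mono) (simp_all add: \<kappa>_def)
      finally show ?thesis .
    qed
  qed (rule that)
qed

lemma transTbar_leading_series:
  fixes q r :: "int \<Rightarrow> complex"
  assumes q: "(\<lambda>n. norm (q n)) summable_on UNIV" and r: "(\<lambda>n. norm (r n)) summable_on UNIV"
    and qr: "(\<lambda>n. norm (q n * r (n+1))) summable_on UNIV" and nonzero: "\<And>n. 1 + q n * r (n+1) \<noteq> 0"
  shows "(\<Sum>\<^sub>\<infinity>k. (- (q k * r (k+1)) + (1 - 0) * q k * (r (k+1+1) / (1 + q (k+1) * r (k+1+1))))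
      / (1 + q k * r (k+1)))
    = (\<Sum>\<^sub>\<infinity>k. r (k+2) * (q k - q (k+1) - q k * q (k+1) * r (k+1))
      / ((1 + q k * r (k+1)) * (1 + q (k+1) * r (k+2))))"
    (is "infsum ?X UNIV = infsum ?Q UNIV")
proof -
  have "(\<lambda>n. norm (1 + q n * r (n+1) - 1)) summable_on UNIV" using qr by simp
  then obtain \<delta> where "0 < \<delta>" and lam_ge: "\<And>n. \<delta> \<le> norm (1 + q n * r (n+1))"
    using bounded_away_from_0_int[of "\<lambda>n. 1 + q n * r (n+1)", OF nonzero] by blast
  have "?X summable_on UNIV"
    using r summable_on_int_shift_iff[of "\<lambda>n. norm (r n)" 1]
    by (intro leading_term_summable[of "\<lambda>n. norm (q n) + norm (r (n+1)) + norm (q n * r (n+1))" \<delta>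
          "\<lambda>n. 1 + q n * r (n+1)" "\<lambda>n. r (n+1)" "\<lambda>n. (1 - 0) * q n" "\<lambda>n. - (q n * r (n+1))",
          OF _ _ \<open>0 < \<delta>\<close> lam_ge]) (auto intro!: summable_on_add q qr)
  define h where "h k = 1 / (1 + q k * r (k+1)) - 1" for k
  have "h summable_on UNIV"
  proof (rule summable_on_norm_dominated[OF summable_on_cmult_right[OF qr, of "1 / \<delta>"]])
    fix k :: int
    have "h k = - (q k * r (k+1)) / (1 + q k * r (k+1))" using nonzero[of k] by (simp add: h_def field_simps)
    then have "norm (h k) = norm (q k * r (k+1)) / norm (1 + q k * r (k+1))" by (simp add: norm_divide)
    also have "\<dots> \<le> norm (q k * r (k+1)) / \<delta>"
      using \<open>0 < \<delta>\<close> lam_ge[of k] by (intro divide_left_mono mult_pos_pos) auto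
    finally show "norm (h k) \<le> 1 / \<delta> * norm (q k * r (k+1))" by simp
  qed
  have "?Q k = ?X k - h k + h (k+1)" for k
  proof -
    have k2: "k + 1 + 1 = k + 2" by simp
    define a b where "a = 1 + q k * r (k+1)" and "b = 1 + q (k+1) * r (k+2)"
    have "a \<noteq> 0" "b \<noteq> 0" using nonzero[of k] nonzero[of "k+1"] by (simp_all add: a_def b_def k2)
    then have "?X k - h k + h (k+1) = (- (q k * r (k+1)) * b + q k * r (k+2) - b + a) / (a * b)"
      unfolding h_def k2 a_def[symmetric] b_def[symmetric] by (simp add: field_simps)
    also have "- (q k * r (k+1)) * b + q k * r (k+2) - b + a = r (k+2) * (q k - q (k+1) - q k * q (k+1) * r (k+1))"
      by (simp add: a_def b_def algebra_simps)
    finally show ?thesis by (simp add: a_def b_def)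
  qed
  then show ?thesis
    using infsum_int_telescoping[OF \<open>?X summable_on UNIV\<close> \<open>h summable_on UNIV\<close>] by simp
qed

lemma transTbar_expansion:
  fixes q r :: "int \<Rightarrow> complex"
  assumes q: "(\<lambda>n. norm (q n)) summable_on UNIV" and r: "(\<lambda>n. norm (r n)) summable_on UNIV"
    and qr: "(\<lambda>n. norm (q n * r (n+1))) summable_on UNIV" and nonzero: "\<And>n. 1 + q n * r (n+1) \<noteq> 0"
  defines "E \<equiv> int_prod (\<lambda>j. 1 + q j * r (j+1))"
    and "Q \<equiv> (\<Sum>\<^sub>\<infinity>k::int. r (k+2) * (q k - q (k+1) - q k * q (k+1) * r (k+1))
                 / ((1 + q k * r (k+1)) * (1 + q (k+1) * r (k+2))))"
  shows "\<exists>R. R \<in> O[at_infinity](\<lambda>z. inverse (z ^ 4)) \<and>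
           (\<forall>\<^sub>F z in at_infinity. transTbar q r z = (1 - inverse (z\<^sup>2) * Q + R z) / E)"
proof -
  have "(\<lambda>n. norm (1 + q n * r (n+1) - 1)) summable_on UNIV" using qr by simp
  then obtain P where P: "\<And>n. P n = (1 + q n * r (n+1)) * P (n+1)" "(P \<longlongrightarrow> 1) at_top" "(P \<longlongrightarrow> E) at_bot"
    and "E \<noteq> 0"
    using int_prod_tails[of "\<lambda>n. 1 + q n * r (n+1)", OF nonzero] unfolding E_def by blast
  obtain \<rho> K where "0 < \<rho>" "\<rho> \<le> 1" and sol: "\<And>w. norm w \<le> \<rho> \<Longrightarrow> \<exists>t u L.
      (\<forall>n. (1 + q n * r (n+1)) * t n = w * t (n+1) + r (n+1) * u (n+1)) \<and>
      (\<forall>n. (1 + q n * r (n+1)) * (u n - u (n+1))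
        = w * (- (q n * r (n+1)) * u (n+1) + (1 - w) * q n * t (n+1))) \<and>
      (t \<longlongrightarrow> 0) at_top \<and> (u \<longlongrightarrow> 1) at_top \<and> (u \<longlongrightarrow> L) at_bot \<and>
      norm (L - 1 - w * (\<Sum>\<^sub>\<infinity>k. (- (q k * r (k+1)) + (1 - 0) * q k * (r (k+1+1) / (1 + q (k+1) * r (k+1+1))))
        / (1 + q k * r (k+1)))) \<le> K * norm w ^ 2"
    by (rule transTbar_normal_form[OF q r qr nonzero]) (rule that)
  note sol = sol[unfolded transTbar_leading_series[OF q r qr nonzero], folded Q_def]
  have v: "((\<lambda>z::complex. inverse (z\<^sup>2)) \<longlongrightarrow> 0) at_infinity"
    using tendsto_power[OF tendsto_inverse_0, of 2] by (simp add: power_inverse)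
  have "\<forall>\<^sub>F z::complex in at_infinity. norm (inverse (z\<^sup>2)) < \<rho>"
    by (rule order_tendstoD(2)[OF tendsto_norm_zero[OF v] \<open>0 < \<rho>\<close>])
  moreover have "\<forall>\<^sub>F z::complex in at_infinity. 1 \<le> norm z"
    unfolding eventually_at_infinity by (rule exI[of _ 1]) auto
  ultimately have "\<forall>\<^sub>F z in at_infinity. \<exists>L. transTbar q r z = 1 / (E * L)
      \<and> norm (L - 1 - inverse (z\<^sup>2) * Q) \<le> K * norm (inverse (z\<^sup>2)) ^ 2"
  proof eventually_elim
    case (elim z)
    then obtain t u L where tuL: "\<forall>n. (1 + q n * r (n+1)) * t n = inverse (z\<^sup>2) * t (n+1) + r (n+1) * u (n+1)"
      "\<forall>n. (1 + q n * r (n+1)) * (u n - u (n+1))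
        = inverse (z\<^sup>2) * (- (q n * r (n+1)) * u (n+1) + (1 - inverse (z\<^sup>2)) * q n * t (n+1))"
      "(t \<longlongrightarrow> 0) at_top" "(u \<longlongrightarrow> 1) at_top" "(u \<longlongrightarrow> L) at_bot"
      "norm (L - 1 - inverse (z\<^sup>2) * Q) \<le> K * norm (inverse (z\<^sup>2)) ^ 2"
      using sol[of "inverse (z\<^sup>2)"] by auto
    have "transTbar q r z = 1 / (E * L)"
      by (rule transTbar_from_normal_form[OF _ _ refl P summable_on_int_tendsto_0(1)[OF r]])
        (use elim tuL in auto)
    then show ?case using tuL(6) by blast
  qed
  from reciprocal_expansion[OF v \<open>E \<noteq> 0\<close> this]
  show ?thesis by (simp add: power_mult[symmetric] power_inverse)
qed

theorem proposition2p7: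
  fixes q r :: "int \<Rightarrow> complex"
  assumes q_decay: "\<And>k::nat. ((\<lambda>n. of_int n ^ k * q n) \<longlongrightarrow> 0) at_top"
                   "\<And>k::nat. ((\<lambda>n. of_int n ^ k * q n) \<longlongrightarrow> 0) at_bot"
      and r_decay: "\<And>k::nat. ((\<lambda>n. of_int n ^ k * r n) \<longlongrightarrow> 0) at_top"
                   "\<And>k::nat. ((\<lambda>n. of_int n ^ k * r n) \<longlongrightarrow> 0) at_bot"
      and nz1: "\<And>n. 1 - q n * r n \<noteq> 0"
      and nz2: "\<And>n. 1 + q n * r (n+1) \<noteq> 0"
  defines "D \<equiv> int_prod (\<lambda>j. 1 - q j * r j)"
      and "E \<equiv> int_prod (\<lambda>j. 1 + q j * r (j+1))"
      and "S \<equiv> (\<Sum>\<^sub>\<infinity>k::int. r k * (q k - q (k+1) - q k * q (k+1) * r (k+1))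
                 / ((1 - q k * r k) * (1 - q (k+1) * r (k+1))))"
      and "Q \<equiv> (\<Sum>\<^sub>\<infinity>k::int. r (k+2) * (q k - q (k+1) - q k * q (k+1) * r (k+1))
                 / ((1 + q k * r (k+1)) * (1 + q (k+1) * r (k+2))))"
  shows "(\<exists>R. R \<in> O[at 0](\<lambda>z. z ^ 4) \<and>
           (\<forall>\<^sub>F z in at 0. transT q r z = (1 - z\<^sup>2 * S + R z) / D))
         \<and> (\<exists>R. R \<in> O[at_infinity](\<lambda>z. inverse (z ^ 4)) \<and>
           (\<forall>\<^sub>F z in at_infinity. transTbar q r z = (1 - inverse (z\<^sup>2) * Q + R z) / E))"
proof -
  have summable: "(\<lambda>n. norm (f n)) summable_on UNIV"
    if "\<And>k::nat. ((\<lambda>n. of_int n ^ k * f n) \<longlongrightarrow> 0) at_top"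
       "\<And>k::nat. ((\<lambda>n. of_int n ^ k * f n) \<longlongrightarrow> 0) at_bot" for f :: "int \<Rightarrow> complex"
    by (rule summable_on_int_if_square_decay[OF that(1)[of 2] that(2)[of 2]])
  have q: "(\<lambda>n. norm (q n)) summable_on UNIV" and r: "(\<lambda>n. norm (r n)) summable_on UNIV"
    by (rule summable[OF q_decay], rule summable[OF r_decay])
  have r1: "(\<lambda>n. norm (r (n+1))) summable_on UNIV"
    using r summable_on_int_shift_iff[of "\<lambda>n. norm (r n)" 1] by simp
  have "(\<lambda>n. norm (q n * r n)) summable_on UNIV"
    by (rule summable)
      (use tendsto_mult[OF q_decay(1) summable_on_int_tendsto_0(1)[OF r]]
        tendsto_mult[OF q_decay(2) summable_on_int_tendsto_0(2)[OF r]] in \<open>simp_all add: mult.assoc\<close>)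
  moreover have "(\<lambda>n. norm (q n * r (n+1))) summable_on UNIV"
    by (rule summable)
      (use tendsto_mult[OF q_decay(1) summable_on_int_tendsto_0(1)[OF r1]]
        tendsto_mult[OF q_decay(2) summable_on_int_tendsto_0(2)[OF r1]] in \<open>simp_all add: mult.assoc\<close>)
  ultimately show ?thesis
    using transT_expansion[OF q r _ nz1] transTbar_expansion[OF q r _ nz2]
    unfolding D_def E_def S_def Q_def by blast
qed

end
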